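(* Let $p$ be a positive integer, $q\ge 3$ an odd integer, and $V$ a finite-dimensional vector space over $\mathbb{Q}$. Let $F$ be a skew-symmetric $q$-multilinear function $V^q\to\mathbb{Q}$ if $p$ is odd, and a symmetric $q$-multilinear function $V^q\to\mathbb{Q}$ if $p$ is even. Then there exists a commutative graded algebra $A=\bigoplus_{i=0}^{pq}A_i$ over $\mathbb{Q}$ satisfying Poincaré duality (with top degree $pq$) such that (i) $A_p=V$, $A_{pq}=\mathbb{Q}$, $A_i=0$ for $i>pq$, and $A_i\ne0$ only if $i$ is a multiple of $p$; (ii) for all $v_1,\dots,v_q\in A_p=V$, $F(v_1,\dots,v_q)=v_1\cup\cdots\cup v_q$ (as elements of $A_{pq}=\mathbb{Q}$).
   Context: A graded algebra over $\mathbb{Q}$ is an associative $\mathbb{Q}$-algebra $A=\bigoplus_{i\ge0}A_i$ (direct sum of vector spaces) whose multiplication $\cup$ maps $A_r\times A_s$ into $A_{r+s}$, with $A_0=\mathbb{Q}$ and $1\in A_0$ the unit. It is commutative if $a\cup b=(-1)^{rs}\,b\cup a$ for $a\in A_r$, $b\in A_s$. Such an $A$ satisfies Poincaré duality (with top degree $n$) if $A_n\cong\mathbb{Q}$, $A_i=0$ for $i>n$, $A_i$ is finite-dimensional for $i<n$, and for every $0\le i\le n$ the map $A_i\to\mathrm{Hom}(A_{n-i},A_n)$, $u\mapsto(v\mapsto u\cup v)$, is an isomorphism. *)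

theory Defs
  imports Complex_Main "HOL-Library.Function_Algebras"
begin

(* Ambient Q-vector space in which the graded algebra is realised:
   functions nat => rat with pointwise addition and scalar multiplication
   (a Q-vector space of countably infinite dimension; every finite-dimensional
   graded algebra embeds into it, so existence here is existence up to iso). *)
type_synonym qvec = "nat \<Rightarrow> rat"

definition qscale :: "rat \<Rightarrow> qvec \<Rightarrow> qvec" where
  "qscale c f = (\<lambda>i. c * f i)"

definition linear_on ::
  "(rat \<Rightarrow> 'a::ab_group_add \<Rightarrow> 'a) \<Rightarrow> (rat \<Rightarrow> 'b::ab_group_add \<Rightarrow> 'b) \<Rightarrow>
   'a set \<Rightarrow> 'b set \<Rightarrow> ('a \<Rightarrow> 'b) \<Rightarrow> bool" where
  "linear_on s1 s2 S T f \<longleftrightarrow>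
     (\<forall>x\<in>S. f x \<in> T) \<and>
     (\<forall>x\<in>S. \<forall>y\<in>S. f (x + y) = f x + f y) \<and>
     (\<forall>c. \<forall>x\<in>S. f (s1 c x) = s2 c (f x))"

definition graded_algebra ::
  "(rat \<Rightarrow> 'a::ab_group_add \<Rightarrow> 'a) \<Rightarrow> 'a set \<Rightarrow> (nat \<Rightarrow> 'a set) \<Rightarrow>
   ('a \<Rightarrow> 'a \<Rightarrow> 'a) \<Rightarrow> 'a \<Rightarrow> bool" where
  "graded_algebra s A G mult one \<longleftrightarrow>
     vector_space s \<and>
     (\<forall>i. module.subspace s (G i)) \<and>
     A = {(\<Sum>i\<in>I. x i) | I x. finite I \<and> (\<forall>i\<in>I. x i \<in> G i)} \<and>
     (\<forall>I x. finite I \<and> (\<forall>i\<in>I. x i \<in> G i) \<and> (\<Sum>i\<in>I. x i) = 0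
              \<longrightarrow> (\<forall>i\<in>I. x i = 0)) \<and>
     (\<forall>a\<in>A. \<forall>b\<in>A. \<forall>c\<in>A. mult (a + b) c = mult a c + mult b c
                         \<and> mult a (b + c) = mult a b + mult a c) \<and>
     (\<forall>k. \<forall>a\<in>A. \<forall>b\<in>A. mult (s k a) b = s k (mult a b) \<and> mult a (s k b) = s k (mult a b)) \<and>
     (\<forall>a\<in>A. \<forall>b\<in>A. \<forall>c\<in>A. mult (mult a b) c = mult a (mult b c)) \<and>
     (\<forall>r s'. \<forall>a\<in>G r. \<forall>b\<in>G s'. mult a b \<in> G (r + s')) \<and>
     one \<noteq> 0 \<and> G 0 = {s k one | k. True} \<and>
     (\<forall>a\<in>A. mult one a = a \<and> mult a one = a)"

definition graded_commutative ::
  "(rat \<Rightarrow> 'a::ab_group_add \<Rightarrow> 'a) \<Rightarrow> (nat \<Rightarrow> 'a set) \<Rightarrow> ('a \<Rightarrow> 'a \<Rightarrow> 'a) \<Rightarrow> bool" where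
  "graded_commutative s G mult \<longleftrightarrow>
     (\<forall>r s'. \<forall>a\<in>G r. \<forall>b\<in>G s'. mult a b = s ((-1) ^ (r * s')) (mult b a))"

definition finite_dim_sub :: "(rat \<Rightarrow> 'a::ab_group_add \<Rightarrow> 'a) \<Rightarrow> 'a set \<Rightarrow> bool" where
  "finite_dim_sub s S \<longleftrightarrow> (\<exists>B. finite B \<and> B \<subseteq> S \<and> module.span s B = S)"

definition poincare_duality ::
  "(rat \<Rightarrow> 'a::ab_group_add \<Rightarrow> 'a) \<Rightarrow> (nat \<Rightarrow> 'a set) \<Rightarrow> ('a \<Rightarrow> 'a \<Rightarrow> 'a) \<Rightarrow> nat \<Rightarrow> bool" where
  "poincare_duality s G mult n \<longleftrightarrow>
     (\<exists>f. linear_on s (*) (G n) UNIV f \<and> bij_betw f (G n) (UNIV :: rat set)) \<and>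
     (\<forall>i>n. G i = {0}) \<and>
     (\<forall>i<n. finite_dim_sub s (G i)) \<and>
     (\<forall>i\<le>n.
        \<comment> \<open>u \<mapsto> (v \<mapsto> u \<cup> v) : A_i \<rightarrow> Hom(A_{n-i}, A_n) is injective \<close>
        (\<forall>u\<in>G i. (\<forall>v\<in>G (n - i). mult u v = 0) \<longrightarrow> u = 0) \<and>
        \<comment> \<open>... and surjective \<close>
        (\<forall>h. linear_on s s (G (n - i)) (G n) h \<longrightarrow>
              (\<exists>u\<in>G i. \<forall>v\<in>G (n - i). h v = mult u v)))"

definition cup_prod :: "('a \<Rightarrow> 'a \<Rightarrow> 'a) \<Rightarrow> 'a \<Rightarrow> 'a list \<Rightarrow> 'a" where
  "cup_prod mult one xs = foldr mult xs one"

definition multilinear ::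
  "(rat \<Rightarrow> 'v::ab_group_add \<Rightarrow> 'v) \<Rightarrow> nat \<Rightarrow> ((nat \<Rightarrow> 'v) \<Rightarrow> rat) \<Rightarrow> bool" where
  "multilinear s q F \<longleftrightarrow>
     (\<forall>v w. (\<forall>i<q. v i = w i) \<longrightarrow> F v = F w) \<and>
     (\<forall>k<q. \<forall>v x y. F (v(k := x + y)) = F (v(k := x)) + F (v(k := y))) \<and>
     (\<forall>k<q. \<forall>v c x. F (v(k := s c x)) = c * F (v(k := x)))"

definition symmetric_ml :: "nat \<Rightarrow> ((nat \<Rightarrow> 'v) \<Rightarrow> rat) \<Rightarrow> bool" where
  "symmetric_ml q F \<longleftrightarrow>
     (\<forall>i<q. \<forall>j<q. \<forall>v. F (v(i := v j, j := v i)) = F v)"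

definition skew_symmetric_ml :: "nat \<Rightarrow> ((nat \<Rightarrow> 'v) \<Rightarrow> rat) \<Rightarrow> bool" where
  "skew_symmetric_ml q F \<longleftrightarrow>
     (\<forall>i<q. \<forall>j<q. i \<noteq> j \<longrightarrow> (\<forall>v. F (v(i := v j, j := v i)) = - F v))"

end

(*
  Write q = 2m + 1 and eps = (-1)^p, choose a basis of V, and let f be the coefficient tensor of
  F; it is symmetric for eps = 1 and alternating for eps = -1. In degree dp the algebra is
  Sym^d V (resp. the exterior power) for d <= m, and the dual of the component of degree (q - d)p
  for d > m; both are realised as eps-symmetric tensors of rank d resp. q - d. Low-degree
  elements multiply as in the symmetric (exterior) algebra while the degree stays <= m, and
  otherwise give the functional obtained by contracting f with their product; a low-degree
  element acts on a high-degree one by contraction, and two high-degree elements multiply to 0.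
  Poincare duality holds by construction, because the standard inner product of tensors is
  positive definite. Associativity reduces, since at most one of three factors of total degree
  <= q can have degree > m, to associativity of the symmetric algebra and the eps-symmetry of f;
  and the product of q elements of V is F by multilinear expansion in the basis.
*)

theory Submission
  imports Defs "HOL-Library.Nat_Bijection"
begin

definition fscale :: "rat \<Rightarrow> ('i \<Rightarrow> rat) \<Rightarrow> ('i \<Rightarrow> rat)" where
  "fscale c t = (\<lambda>x. c * t x)"

interpretation fvs: vector_space "fscale :: rat \<Rightarrow> ('i \<Rightarrow> rat) \<Rightarrow> _"
  by unfold_locales (auto simp: fscale_def fun_eq_iff algebra_simps)

lemma qscale_eq_fscale: "qscale = fscale"
  by (auto simp: fun_eq_iff qscale_def fscale_def)

lemma fscale_simps [simp]: "fscale 0 x = 0" "fscale c 0 = 0" "fscale 1 x = x"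
  by (auto simp: fscale_def fun_eq_iff)

lemma fscale_fscale: "fscale a (fscale b x) = fscale (a * b) x"
  by (simp add: fscale_def fun_eq_iff)

lemma sum_fun_apply: "(sum f A) x = (\<Sum>a\<in>A. f a x)"
  by (induction A rule: infinite_finite_induct) auto

lemma fscale_sum: "fscale c (sum x I) = (\<Sum>i\<in>I. fscale c (x i))"
  by (auto simp: fscale_def fun_eq_iff sum_fun_apply sum_distrib_left)

lemma (in vector_space) subspace_finitely_spanned:
  assumes "subspace Y" "Y \<subseteq> span C" "finite C"
  shows "\<exists>B. finite B \<and> B \<subseteq> Y \<and> span B = Y"
proof -
  obtain B where B: "B \<subseteq> Y" "independent B" "Y \<subseteq> span B"
    using maximal_independent_subset by blast
  have "finite B" using independent_span_bound[OF assms(3) B(2)] B(1) assms(2) by blast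
  moreover have "span B = Y"
    using B assms(1) span_minimal[of B Y] by blast
  ultimately show ?thesis using B(1) by blast
qed

definition dot_on :: "'i set \<Rightarrow> ('i \<Rightarrow> rat) \<Rightarrow> ('i \<Rightarrow> rat) \<Rightarrow> rat" where
  "dot_on K x y = (\<Sum>i\<in>K. x i * y i)"

lemma dot_on_add_left: "dot_on K (x + y) z = dot_on K x z + dot_on K y z"
  by (simp add: dot_on_def sum.distrib algebra_simps)
lemma dot_on_add_right: "dot_on K z (x + y) = dot_on K z x + dot_on K z y"
  by (simp add: dot_on_def sum.distrib algebra_simps)
lemma dot_on_diff_left: "dot_on K (x - y) z = dot_on K x z - dot_on K y z"
  by (simp add: dot_on_def sum_subtractf algebra_simps)
lemma dot_on_diff_right: "dot_on K z (x - y) = dot_on K z x - dot_on K z y"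
  by (simp add: dot_on_def sum_subtractf algebra_simps)
lemma dot_on_scale_left: "dot_on K (fscale c x) z = c * dot_on K x z"
  by (simp add: dot_on_def fscale_def sum_distrib_left algebra_simps)
lemma dot_on_scale_right: "dot_on K z (fscale c x) = c * dot_on K z x"
  by (simp add: dot_on_def fscale_def sum_distrib_left algebra_simps)
lemma dot_on_commute: "dot_on K x y = dot_on K y x"
  by (simp add: dot_on_def algebra_simps)

lemma dot_on_self_eq_0:
  assumes "finite K" "dot_on K x x = 0" "\<forall>i. i \<notin> K \<longrightarrow> x i = 0"
  shows "x = 0"
proof -
  have "\<forall>i\<in>K. x i * x i = 0"
    using assms(2) unfolding dot_on_def
    by (subst sum_nonneg_eq_0_iff[symmetric]) (auto simp: assms(1))
  then show ?thesis using assms(3) by (auto simp: fun_eq_iff)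
qed

lemma span_vanishing_outside:
  assumes "\<forall>b\<in>B. \<forall>i. i \<notin> K \<longrightarrow> b i = 0" "y \<in> fvs.span B"
  shows "\<forall>i. i \<notin> K \<longrightarrow> y i = 0"
proof -
  have "fvs.subspace {y. \<forall>i. i \<notin> K \<longrightarrow> y i = (0::rat)}"
    by (auto simp: fvs.subspace_def fscale_def)
  then show ?thesis using fvs.span_minimal[of B "{y. \<forall>i. i \<notin> K \<longrightarrow> y i = (0::rat)}"] assms by auto
qed

lemma riesz_representation_insert:
  assumes add: "\<forall>y\<in>fvs.span (insert b B). \<forall>z\<in>fvs.span (insert b B). h (y + z) = h y + h z"
    and scale: "\<forall>c. \<forall>y\<in>fvs.span (insert b B). h (fscale c y) = c * h y"
    and c': "c' \<in> fvs.span B" "\<forall>y\<in>fvs.span B. h y = dot_on K c' y"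
    and r: "r \<in> fvs.span (insert b B)" "\<forall>y\<in>fvs.span B. dot_on K r y = 0"
    and rb: "dot_on K r b = dot_on K r r" "dot_on K r r \<noteq> 0"
  shows "\<exists>c\<in>fvs.span (insert b B). \<forall>y\<in>fvs.span (insert b B). h y = dot_on K c y"
proof -
  have sub: "fvs.span B \<subseteq> fvs.span (insert b B)" by (simp add: fvs.span_mono subset_insertI)
  have bin: "b \<in> fvs.span (insert b B)" by (simp add: fvs.span_base)
  define t where "t = (h b - dot_on K c' b) / dot_on K r r"
  define c where "c = c' + fscale t r"
  have cin: "c \<in> fvs.span (insert b B)" unfolding c_def
    using c'(1) sub r(1) by (simp add: fvs.span_add fvs.span_scale subsetD)
  have "h y = dot_on K c y" if y: "y \<in> fvs.span (insert b B)" for y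
  proof -
    obtain k where k: "y - fscale k b \<in> fvs.span B" using y fvs.span_breakdown_eq by blast
    define y' where "y' = y - fscale k b"
    have yy: "y = y' + fscale k b" by (simp add: y'_def)
    have y'in: "y' \<in> fvs.span (insert b B)" using k sub by (auto simp: y'_def)
    have kbin: "fscale k b \<in> fvs.span (insert b B)" using bin by (simp add: fvs.span_scale)
    have "h y = h y' + h (fscale k b)"
      using add y'in kbin yy by blast
    also have "h (fscale k b) = k * h b" using scale bin by blast
    finally have "h y = h y' + k * h b" .
    moreover have "dot_on K c y =
        dot_on K c' y' + k * dot_on K c' b + t * dot_on K r y' + t * k * dot_on K r b"
      by (simp add: c_def yy dot_on_add_left dot_on_add_right dot_on_scale_left dot_on_scale_right
          algebra_simps)
    moreover have "dot_on K r y' = 0" using r(2) k by (simp add: y'_def)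
    moreover have "h y' = dot_on K c' y'" using c'(2) k by (simp add: y'_def)
    moreover have "t * dot_on K r b = h b - dot_on K c' b" using rb by (simp add: t_def)
    ultimately show ?thesis by (simp add: algebra_simps)
  qed
  then show ?thesis using cin by blast
qed

lemma riesz_representation_span:
  fixes B :: "('i \<Rightarrow> rat) set"
  assumes "finite B" "finite K" "\<forall>b\<in>B. \<forall>i. i \<notin> K \<longrightarrow> b i = 0"
    and "\<forall>y\<in>fvs.span B. \<forall>z\<in>fvs.span B. h (y + z) = h y + h z"
    and "\<forall>c. \<forall>y\<in>fvs.span B. h (fscale c y) = c * h y"
  shows "\<exists>c\<in>fvs.span B. \<forall>y\<in>fvs.span B. h y = dot_on K c y"
  using assms(1,3-5)
proof (induction B arbitrary: h rule: finite_induct)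
  case empty
  then show ?case by (auto intro!: bexI[of _ 0] simp: dot_on_def)
next
  case (insert b B h)
  have sub: "fvs.span B \<subseteq> fvs.span (insert b B)" by (simp add: fvs.span_mono subset_insertI)
  obtain c' where c': "c' \<in> fvs.span B" "\<forall>y\<in>fvs.span B. h y = dot_on K c' y"
    using insert.IH[of h] insert.prems sub by blast
  obtain b' where b': "b' \<in> fvs.span B" "\<forall>y\<in>fvs.span B. dot_on K b y = dot_on K b' y"
  proof -
    have "\<exists>c\<in>fvs.span B. \<forall>y\<in>fvs.span B. dot_on K b y = dot_on K c y"
      by (rule insert.IH) (use insert.prems dot_on_add_right dot_on_scale_right in blast)+
    then show ?thesis using that by (metis dot_on_commute)
  qed
  \<comment> \<open>Gram--Schmidt: \<open>r\<close> is the component of \<open>b\<close> orthogonal to \<open>span B\<close>\<close>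
  define r where "r = b - b'"
  have rin: "r \<in> fvs.span (insert b B)" unfolding r_def
    using b'(1) sub by (simp add: fvs.span_diff fvs.span_base subsetD)
  have rorth: "\<forall>y\<in>fvs.span B. dot_on K r y = 0"
    using b'(2) by (simp add: r_def dot_on_diff_left)
  have rb: "dot_on K r b = dot_on K r r"
    using rorth b'(1) by (simp add: r_def dot_on_diff_right)
  show ?case
  proof (cases "dot_on K r r = 0")
    case True
    have "\<forall>i. i \<notin> K \<longrightarrow> r i = 0"
      using span_vanishing_outside[of "insert b B" K r] rin insert.prems by auto
    then have "r = 0" using dot_on_self_eq_0[OF assms(2) True] by simp
    then have "b \<in> fvs.span B" using b'(1) by (simp add: r_def)
    then have "fvs.span (insert b B) = fvs.span B" by (simp add: fvs.span_redundant)
    then show ?thesis using c' by auto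
  next
    case False
    show ?thesis
      using riesz_representation_insert[OF insert.prems(2,3) c' rin rorth rb False] .
  qed
qed

lemma list_update_append_middle:
  "a < length u \<Longrightarrow> (x @ u @ y)[length x + a := v] = x @ u[a := v] @ y"
  by (simp add: list_update_append)

lemma sum_rotate3:
  fixes g :: "'a \<Rightarrow> 'b \<Rightarrow> 'c \<Rightarrow> 'd::comm_monoid_add"
  shows "(\<Sum>w\<in>C. \<Sum>u\<in>A. \<Sum>v\<in>B. g u v w) = (\<Sum>u\<in>A. \<Sum>v\<in>B. \<Sum>w\<in>C. g u v w)"
  by (subst sum.swap) (rule sum.cong[OF refl], rule sum.swap)

context
  fixes g :: "'a \<Rightarrow> 'b \<Rightarrow> 'c \<Rightarrow> 'd::comm_semiring_0"
begin

lemma sum_mult_rotate3: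
  "(\<Sum>w\<in>C. c w * (\<Sum>u\<in>A. \<Sum>v\<in>B. g u v w)) = (\<Sum>u\<in>A. \<Sum>v\<in>B. \<Sum>w\<in>C. c w * g u v w)"
  by (simp only: sum_distrib_left) (rule sum_rotate3)

lemma sum_mult_nested3:
  "(\<Sum>u\<in>A. a u * (\<Sum>v\<in>B. \<Sum>w\<in>C. g u v w)) = (\<Sum>u\<in>A. \<Sum>v\<in>B. \<Sum>w\<in>C. a u * g u v w)"
  by (simp only: sum_distrib_left)

end

lemma sum_swap_factor:
  fixes h :: "'a \<Rightarrow> 'b \<Rightarrow> 'd::comm_semiring_0"
  shows "(\<Sum>x\<in>A. \<Sum>w\<in>C. R x * c w * h x w) = (\<Sum>w\<in>C. c w * (\<Sum>x\<in>A. R x * h x w))"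
  by (subst sum.swap) (simp only: sum_distrib_left ac_simps)

lemma sum_factor_inner:
  fixes h :: "'a \<Rightarrow> 'b \<Rightarrow> 'd::comm_semiring_0"
  shows "(\<Sum>u\<in>A. \<Sum>y\<in>C. a u * R y * h u y) = (\<Sum>u\<in>A. a u * (\<Sum>y\<in>C. R y * h u y))"
  by (simp only: sum_distrib_left ac_simps)

lemma sum_swap_mult:
  fixes h :: "'a \<Rightarrow> 'b \<Rightarrow> 'd::comm_semiring_0"
  shows "(\<Sum>w\<in>C. c w * (\<Sum>v\<in>B. b v * h v w)) = (\<Sum>v\<in>B. \<Sum>w\<in>C. b v * c w * h v w)"
  by (simp only: sum_distrib_left) (subst sum.swap, simp only: ac_simps)

text \<open>A \<open>j\<close>-tensor on \<open>\<rat>\<^sup>n\<close> is a function on lists, supported on the words of length \<open>j\<close>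
  over \<open>{..<n}\<close>. For \<open>eps = 1\<close> (\<open>eps = -1\<close>) the elements of \<open>symt j\<close> are the symmetric
  (alternating) tensors, a model of the \<open>j\<close>-th symmetric (exterior) power. The standard inner
  product \<open>pairing j\<close> is positive definite on them, so it identifies \<open>symt j\<close> with its dual.\<close>

locale sym_tensors =
  fixes n :: nat and eps :: rat
  assumes eps_square: "eps * eps = 1"
begin

definition words :: "nat \<Rightarrow> nat list set" where
  "words j = {xs. length xs = j \<and> set xs \<subseteq> {..<n}}"

definition symt :: "nat \<Rightarrow> (nat list \<Rightarrow> rat) set" where
  "symt j = {t. (\<forall>xs. xs \<notin> words j \<longrightarrow> t xs = 0) \<and>
      (\<forall>xs\<in>words j. \<forall>a<j. \<forall>b<j. a \<noteq> b \<longrightarrow> t (xs[a := xs!b, b := xs!a]) = eps * t xs)}"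

definition pairing :: "nat \<Rightarrow> (nat list \<Rightarrow> rat) \<Rightarrow> (nat list \<Rightarrow> rat) \<Rightarrow> rat" where
  "pairing j = dot_on (words j)"

lemma finite_words [simp]: "finite (words j)"
proof -
  have "words j = {xs. set xs \<subseteq> {..<n} \<and> length xs = j}" by (auto simp: words_def)
  then show ?thesis using finite_lists_length_eq[of "{..<n}" j] by simp
qed

lemma words_0 [simp]: "words 0 = {[]}"
  by (auto simp: words_def)

lemma append_in_words: "u \<in> words k \<Longrightarrow> w \<in> words l \<Longrightarrow> u @ w \<in> words (k + l)"
  by (auto simp: words_def)

lemma length_in_words: "xs \<in> words j \<Longrightarrow> length xs = j"
  by (simp add: words_def)

lemma sum_words_append:
  "(\<Sum>xs\<in>words (k + l). g xs) = (\<Sum>u\<in>words k. \<Sum>w\<in>words l. g (u @ w))"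
proof -
  have inj: "inj_on (\<lambda>(u, w). u @ w) (words k \<times> words l)"
    by (auto simp: inj_on_def words_def)
  have img: "(\<lambda>(u, w). u @ w) ` (words k \<times> words l) = words (k + l)"
  proof
    show "(\<lambda>(u, w). u @ w) ` (words k \<times> words l) \<subseteq> words (k + l)" using append_in_words by auto
    show "words (k + l) \<subseteq> (\<lambda>(u, w). u @ w) ` (words k \<times> words l)"
    proof
      fix xs assume "xs \<in> words (k + l)"
      then have "take k xs \<in> words k" "drop k xs \<in> words l" "xs = take k xs @ drop k xs"
        by (auto simp: words_def dest: in_set_takeD in_set_dropD)
      then show "xs \<in> (\<lambda>(u, w). u @ w) ` (words k \<times> words l)"
        by (metis (no_types, lifting) SigmaI case_prod_conv image_eqI)
    qed
  qed
  have "(\<Sum>xs\<in>words (k + l). g xs) = (\<Sum>p\<in>words k \<times> words l. g ((\<lambda>(u, w). u @ w) p))"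
    using sum.reindex[OF inj, of g] img by simp
  also have "\<dots> = (\<Sum>u\<in>words k. \<Sum>w\<in>words l. g (u @ w))"
    by (simp add: sum.cartesian_product split_def)
  finally show ?thesis .
qed

lemma words_1: "words 1 = (\<lambda>i. [i]) ` {..<n}"
proof
  show "words 1 \<subseteq> (\<lambda>i. [i]) ` {..<n}"
  proof
    fix xs assume "xs \<in> words 1"
    then obtain i where "xs = [i]" "i < n" by (auto simp: words_def length_Suc_conv)
    then show "xs \<in> (\<lambda>i. [i]) ` {..<n}" by auto
  qed
qed (auto simp: words_def)

lemma sum_words_1: "(\<Sum>u\<in>words 1. g u) = (\<Sum>i<n. g [i])"
  by (subst words_1) (simp add: sum.reindex inj_on_def)

lemma sum_words_Suc: "(\<Sum>xs\<in>words (Suc l). g xs) = (\<Sum>i<n. \<Sum>w\<in>words l. g (i # w))"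
proof -
  have "(\<Sum>xs\<in>words (1 + l). g xs) = (\<Sum>u\<in>words 1. \<Sum>w\<in>words l. g (u @ w))"
    by (rule sum_words_append)
  also have "\<dots> = (\<Sum>i<n. \<Sum>w\<in>words l. g ([i] @ w))" by (rule sum_words_1)
  finally show ?thesis by simp
qed

lemma eps_power: "eps ^ k = (if even k then 1 else eps)"
  by (induction k) (auto simp: eps_square)

lemma eps_power_square: "eps ^ k * eps ^ k = 1"
  by (simp add: eps_power eps_square)

lemma eps_power_add_even: "eps ^ (y + 2 * k) = eps ^ y"
  by (simp add: power_add power_mult power2_eq_square eps_square)

lemma symt_outside: "t \<in> symt j \<Longrightarrow> xs \<notin> words j \<Longrightarrow> t xs = 0"
  by (simp add: symt_def)

lemma symt_swap: "t \<in> symt j \<Longrightarrow> xs \<in> words j \<Longrightarrow> a < j \<Longrightarrow> b < j \<Longrightarrow> a \<noteq> b \<Longrightarrow>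
   t (xs[a := xs!b, b := xs!a]) = eps * t xs"
  by (simp add: symt_def)

lemma zero_in_symt [simp]: "0 \<in> symt j"
  by (simp add: symt_def)

lemma add_in_symt: "s \<in> symt j \<Longrightarrow> t \<in> symt j \<Longrightarrow> s + t \<in> symt j"
  by (simp add: symt_def algebra_simps)

lemma diff_in_symt: "s \<in> symt j \<Longrightarrow> t \<in> symt j \<Longrightarrow> s - t \<in> symt j"
  by (simp add: symt_def algebra_simps)

lemma fscale_in_symt: "t \<in> symt j \<Longrightarrow> fscale c t \<in> symt j"
  by (simp add: symt_def fscale_def algebra_simps)

lemma scaled_in_symt: "t \<in> symt j \<Longrightarrow> (\<lambda>xs. c * t xs) \<in> symt j"
  using fscale_in_symt[of t j c] by (simp add: fscale_def)

lemma sum_in_symt: "(\<And>z. z \<in> Z \<Longrightarrow> t z \<in> symt j) \<Longrightarrow> sum t Z \<in> symt j"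
  by (induction Z rule: infinite_finite_induct) (auto intro: add_in_symt)

lemma sum_apply_in_symt: "(\<And>z. z \<in> Z \<Longrightarrow> t z \<in> symt j) \<Longrightarrow> (\<lambda>xs. \<Sum>z\<in>Z. t z xs) \<in> symt j"
  using sum_in_symt[of Z t j] by (simp add: sum_fun_apply[abs_def])

lemma subspace_symt: "fvs.subspace (symt j)"
  by (auto simp: fvs.subspace_def add_in_symt fscale_in_symt)

lemma symt_slice:
  assumes phi: "\<phi> \<in> symt N" and x: "x \<in> words i" and y: "y \<in> words l" and N: "N = i + k + l"
  shows "(\<lambda>u. if u \<in> words k then \<phi> (x @ u @ y) else 0) \<in> symt k"
  unfolding symt_def
proof (intro CollectI conjI allI ballI impI)
  fix u a b assume u: "u \<in> words k" and ab: "a < k" "b < k" "a \<noteq> b"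
  have lu: "length u = k" using u by (simp add: words_def)
  have uu: "u[a := u ! b, b := u ! a] \<in> words k"
    using u ab by (auto simp: words_def dest!: set_update_subset_insert[THEN subsetD])
  have lx: "length x = i" using x by (simp add: words_def)
  have eq: "x @ u[a := u ! b, b := u ! a] @ y =
     (x @ u @ y)[i + a := (x @ u @ y) ! (i + b), i + b := (x @ u @ y) ! (i + a)]"
    using lu lx ab by (simp add: list_update_append_middle nth_append list_update_append)
  have "x @ u @ y \<in> words N" using x u y N by (auto simp: words_def)
  then show "(if u[a := u ! b, b := u ! a] \<in> words k then \<phi> (x @ u[a := u ! b, b := u ! a] @ y)
      else 0) =
         eps * (if u \<in> words k then \<phi> (x @ u @ y) else 0)"
    using uu u eq symt_swap[OF phi, of "x @ u @ y" "i + a" "i + b"] ab N by simp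
qed simp

lemma symt_swap_adjacent:
  assumes "\<phi> \<in> symt N" "x @ a # b # r \<in> words N"
  shows "\<phi> (x @ a # b # r) = eps * \<phi> (x @ b # a # r)"
proof -
  have l: "length (x @ a # b # r) = N" using assms(2) by (simp add: words_def)
  have eq: "(x @ a # b # r)[length x := (x @ a # b # r) ! Suc (length x),
      Suc (length x) := (x @ a # b # r) ! length x] = x @ b # a # r"
    by (simp add: list_update_append nth_append)
  have "\<phi> (x @ b # a # r) = eps * \<phi> (x @ a # b # r)"
    using symt_swap[OF assms(1,2), of "length x" "Suc (length x)"] l eq by simp
  then have "eps * \<phi> (x @ b # a # r) = (eps * eps) * \<phi> (x @ a # b # r)" by simp
  then show ?thesis using eps_square by simp
qed

lemma symt_move_letter:
  assumes "\<phi> \<in> symt N" "x @ a # w @ r \<in> words N"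
  shows "\<phi> (x @ a # w @ r) = eps ^ length w * \<phi> (x @ w @ a # r)"
  using assms(2)
proof (induction w arbitrary: x)
  case Nil then show ?case by simp
next
  case (Cons b w)
  have "\<phi> (x @ a # b # w @ r) = eps * \<phi> (x @ b # a # w @ r)"
    using symt_swap_adjacent[OF assms(1)] Cons.prems by simp
  also have "\<phi> (x @ b # a # w @ r) = \<phi> ((x @ [b]) @ a # w @ r)" by simp
  also have "\<dots> = eps ^ length w * \<phi> ((x @ [b]) @ w @ a # r)"
    by (rule Cons.IH) (use Cons.prems in \<open>auto simp: words_def\<close>)
  finally show ?case by simp
qed

lemma symt_swap_blocks:
  assumes "\<phi> \<in> symt N" "x @ u @ w @ r \<in> words N"
  shows "\<phi> (x @ u @ w @ r) = eps ^ (length u * length w) * \<phi> (x @ w @ u @ r)"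
  using assms(2)
proof (induction u arbitrary: x)
  case Nil then show ?case by simp
next
  case (Cons a u)
  have "\<phi> (x @ (a # u) @ w @ r) = \<phi> ((x @ [a]) @ u @ w @ r)" by simp
  also have "\<dots> = eps ^ (length u * length w) * \<phi> ((x @ [a]) @ w @ u @ r)"
    by (rule Cons.IH) (use Cons.prems in \<open>auto simp: words_def\<close>)
  also have "\<phi> ((x @ [a]) @ w @ u @ r) = \<phi> (x @ a # w @ (u @ r))" by simp
  also have "\<dots> = eps ^ length w * \<phi> (x @ w @ a # u @ r)"
    by (rule symt_move_letter[OF assms(1)]) (use Cons.prems in \<open>auto simp: words_def\<close>)
  finally show ?case by (simp add: power_add algebra_simps)
qed

lemma pairing_eq_sum: "pairing j c \<phi> = (\<Sum>y\<in>words j. c y * \<phi> y)"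
  by (simp add: pairing_def dot_on_def)

lemma pairing_add_left: "pairing j (x + y) z = pairing j x z + pairing j y z"
  by (simp add: pairing_def dot_on_add_left)

lemma pairing_scale_left: "pairing j (fscale c x) z = c * pairing j x z"
  by (simp add: pairing_def dot_on_scale_left)

lemma pairing_self_eq_0: "t \<in> symt j \<Longrightarrow> pairing j t t = 0 \<Longrightarrow> t = 0"
  unfolding pairing_def by (rule dot_on_self_eq_0) (auto simp: symt_def)

lemma pairing_inject:
  assumes "c \<in> symt j" "c' \<in> symt j" "\<forall>\<phi>\<in>symt j. pairing j c \<phi> = pairing j c' \<phi>"
  shows "c = c'"
proof -
  have d: "c - c' \<in> symt j" using assms by (simp add: diff_in_symt)
  have "pairing j (c - c') (c - c') = 0" using assms(3) d
    by (simp add: pairing_def dot_on_diff_left)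
  then show ?thesis using pairing_self_eq_0[OF d] by simp
qed

definition delta_tensor :: "nat list \<Rightarrow> nat list \<Rightarrow> rat" where
  "delta_tensor xs = (\<lambda>ys. if ys = xs then 1 else 0)"

lemma delta_tensor_expansion:
  assumes "t \<in> symt j"
  shows "t = (\<Sum>xs\<in>words j. fscale (t xs) (delta_tensor xs))"
proof
  fix ys
  have "(\<Sum>xs\<in>words j. fscale (t xs) (delta_tensor xs)) ys =
      (\<Sum>xs\<in>words j. t xs * (if ys = xs then 1 else 0))"
    by (simp add: sum_fun_apply fscale_def delta_tensor_def)
  also have "\<dots> = (\<Sum>xs\<in>words j. if xs = ys then t ys else 0)"
    by (rule sum.cong) (simp_all split: if_splits)
  also have "\<dots> = t ys" using assms by (simp add: sum.delta symt_outside)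
  finally show "t ys = (\<Sum>xs\<in>words j. fscale (t xs) (delta_tensor xs)) ys" ..
qed

lemma symt_finitely_spanned: "\<exists>B. finite B \<and> B \<subseteq> symt j \<and> fvs.span B = symt j"
proof (rule fvs.subspace_finitely_spanned[OF subspace_symt])
  show "finite (delta_tensor ` words j)" by simp
  show "symt j \<subseteq> fvs.span (delta_tensor ` words j)"
  proof
    fix t assume "t \<in> symt j"
    then have "t = (\<Sum>xs\<in>words j. fscale (t xs) (delta_tensor xs))" by (rule delta_tensor_expansion)
    also have "\<dots> \<in> fvs.span (delta_tensor ` words j)"
      by (intro fvs.span_sum fvs.span_scale fvs.span_base) auto
    finally show "t \<in> fvs.span (delta_tensor ` words j)" .
  qed
qed

lemma riesz_symt:
  assumes add: "\<And>x y. x \<in> symt j \<Longrightarrow> y \<in> symt j \<Longrightarrow> h (x + y) = h x + h y"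
    and scale: "\<And>c x. x \<in> symt j \<Longrightarrow> h (fscale c x) = c * h x"
  shows "\<exists>c\<in>symt j. \<forall>\<phi>\<in>symt j. pairing j c \<phi> = h \<phi>"
proof -
  obtain B where B: "finite B" "B \<subseteq> symt j" "fvs.span B = symt j"
    using symt_finitely_spanned by blast
  have "\<exists>c\<in>fvs.span B. \<forall>y\<in>fvs.span B. h y = dot_on (words j) c y"
    using B add scale by (intro riesz_representation_span) (auto simp: symt_def)
  then show ?thesis using B by (auto simp: pairing_def)
qed

definition riesz :: "nat \<Rightarrow> ((nat list \<Rightarrow> rat) \<Rightarrow> rat) \<Rightarrow> (nat list \<Rightarrow> rat)" where
  "riesz j g = (SOME c. c \<in> symt j \<and> (\<forall>\<phi>\<in>symt j. pairing j c \<phi> = g \<phi>))"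

lemma riesz_spec:
  assumes "\<And>x y. x \<in> symt j \<Longrightarrow> y \<in> symt j \<Longrightarrow> g (x + y) = g x + g y"
    and "\<And>c x. x \<in> symt j \<Longrightarrow> g (fscale c x) = c * g x"
  shows "riesz j g \<in> symt j \<and> (\<forall>\<phi>\<in>symt j. pairing j (riesz j g) \<phi> = g \<phi>)"
proof -
  have "\<exists>c. c \<in> symt j \<and> (\<forall>\<phi>\<in>symt j. pairing j c \<phi> = g \<phi>)" using riesz_symt[OF assms] by blast
  then show ?thesis unfolding riesz_def by (rule someI_ex)
qed

lemma riesz_eqI:
  assumes "c \<in> symt j" "\<forall>\<phi>\<in>symt j. pairing j c \<phi> = g \<phi>"
  shows "riesz j g = c"
proof -
  have "riesz j g \<in> symt j \<and> (\<forall>\<phi>\<in>symt j. pairing j (riesz j g) \<phi> = g \<phi>)"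
    unfolding riesz_def by (rule someI[of _ c]) (use assms in blast)
  then show ?thesis using pairing_inject[of "riesz j g" j c] assms by auto
qed

lemma riesz_cong: "(\<And>\<phi>. \<phi> \<in> symt j \<Longrightarrow> g \<phi> = g' \<phi>) \<Longrightarrow> riesz j g = riesz j g'"
  unfolding riesz_def by (rule arg_cong[where f = Eps]) (auto simp: fun_eq_iff)

lemma pairing_slice:
  assumes X: "\<forall>\<psi>\<in>symt j. pairing j X \<psi> = pairing j P \<psi>"
    and phi: "\<phi> \<in> symt N" and x: "x \<in> words i" and z: "z \<in> words l" and N: "N = i + j + l"
  shows "(\<Sum>w\<in>words j. X w * \<phi> (x @ w @ z)) = (\<Sum>w\<in>words j. P w * \<phi> (x @ w @ z))"
proof -
  define s where "s = (\<lambda>w. if w \<in> words j then \<phi> (x @ w @ z) else 0)"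
  have "s \<in> symt j" unfolding s_def by (rule symt_slice[OF phi x z N])
  then have "pairing j X s = pairing j P s" using X by blast
  then show ?thesis by (simp add: pairing_eq_sum s_def)
qed

text \<open>The product of the symmetric (exterior) algebra: \<open>sym_prod k l a b\<close> is the symmetrisation
  of \<open>a \<otimes> b\<close>, obtained as the representative in \<open>symt (k + l)\<close> of the functional
  \<open>\<phi> \<mapsto> \<langle>a \<otimes> b, \<phi>\<rangle>\<close>.\<close>

definition tensor_pairing ::
  "nat \<Rightarrow> nat \<Rightarrow> (nat list \<Rightarrow> rat) \<Rightarrow> (nat list \<Rightarrow> rat) \<Rightarrow> (nat list \<Rightarrow> rat) \<Rightarrow> rat" where
  "tensor_pairing k l a b \<phi> = (\<Sum>u\<in>words k. \<Sum>w\<in>words l. a u * b w * \<phi> (u @ w))"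

definition sym_prod :: "nat \<Rightarrow> nat \<Rightarrow> (nat list \<Rightarrow> rat) \<Rightarrow> (nat list \<Rightarrow> rat) \<Rightarrow> (nat list \<Rightarrow> rat)" where
  "sym_prod k l a b = riesz (k + l) (tensor_pairing k l a b)"

lemma tensor_pairing_add: "tensor_pairing k l a b (x + y) =
    tensor_pairing k l a b x + tensor_pairing k l a b y"
  by (simp add: tensor_pairing_def sum.distrib algebra_simps)
lemma tensor_pairing_scale: "tensor_pairing k l a b (fscale c x) = c * tensor_pairing k l a b x"
  by (simp add: tensor_pairing_def fscale_def sum_distrib_left algebra_simps)
lemma tensor_pairing_add_left: "tensor_pairing k l (a + a') b \<phi> =
    tensor_pairing k l a b \<phi> + tensor_pairing k l a' b \<phi>"
  by (simp add: tensor_pairing_def sum.distrib algebra_simps)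
lemma tensor_pairing_add_right: "tensor_pairing k l a (b + b') \<phi> =
    tensor_pairing k l a b \<phi> + tensor_pairing k l a b' \<phi>"
  by (simp add: tensor_pairing_def sum.distrib algebra_simps)
lemma tensor_pairing_scale_left: "tensor_pairing k l (fscale c a) b \<phi> =
    c * tensor_pairing k l a b \<phi>"
  by (simp add: tensor_pairing_def fscale_def sum_distrib_left algebra_simps)
lemma tensor_pairing_scale_right: "tensor_pairing k l a (fscale c b) \<phi> =
    c * tensor_pairing k l a b \<phi>"
  by (simp add: tensor_pairing_def fscale_def sum_distrib_left algebra_simps)

lemma sym_prod_in_symt: "sym_prod k l a b \<in> symt (k + l)"
  and pairing_sym_prod: "\<phi> \<in> symt (k + l) \<Longrightarrow> pairing (k + l) (sym_prod k l a b) \<phi> =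
      tensor_pairing k l a b \<phi>"
  using riesz_spec[of "k + l" "tensor_pairing k l a b"]
  by (auto simp: sym_prod_def tensor_pairing_add tensor_pairing_scale)

lemma sym_prodI:
  "c \<in> symt (k + l) \<Longrightarrow> (\<And>\<phi>. \<phi> \<in> symt (k + l) \<Longrightarrow> pairing (k + l) c \<phi> = tensor_pairing k l a b \<phi>)
    \<Longrightarrow> sym_prod k l a b = c"
  unfolding sym_prod_def by (rule riesz_eqI) auto

lemma sym_prod_add_left: "sym_prod k l (a + a') b = sym_prod k l a b + sym_prod k l a' b"
  by (rule sym_prodI) (auto simp: sym_prod_in_symt pairing_sym_prod add_in_symt pairing_add_left
      tensor_pairing_add_left)
lemma sym_prod_add_right: "sym_prod k l a (b + b') = sym_prod k l a b + sym_prod k l a b'"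
  by (rule sym_prodI) (auto simp: sym_prod_in_symt pairing_sym_prod add_in_symt pairing_add_left
      tensor_pairing_add_right)
lemma sym_prod_scale_left: "sym_prod k l (fscale c a) b = fscale c (sym_prod k l a b)"
  by (rule sym_prodI) (auto simp: sym_prod_in_symt pairing_sym_prod fscale_in_symt
      pairing_scale_left tensor_pairing_scale_left)
lemma sym_prod_scale_right: "sym_prod k l a (fscale c b) = fscale c (sym_prod k l a b)"
  by (rule sym_prodI) (auto simp: sym_prod_in_symt pairing_sym_prod fscale_in_symt
      pairing_scale_left tensor_pairing_scale_right)

lemma sym_prod_slice:
  assumes "\<phi> \<in> symt N" "x \<in> words i" "z \<in> words l" "N = i + (k + k') + l"
  shows "(\<Sum>y\<in>words (k + k'). sym_prod k k' a b y * \<phi> (x @ y @ z)) =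
         (\<Sum>u\<in>words k. \<Sum>v\<in>words k'. a u * b v * \<phi> (x @ u @ v @ z))"
proof -
  define s where "s = (\<lambda>y. if y \<in> words (k + k') then \<phi> (x @ y @ z) else 0)"
  have sS: "s \<in> symt (k + k')" unfolding s_def by (rule symt_slice[OF assms])
  have "(\<Sum>y\<in>words (k + k'). sym_prod k k' a b y * \<phi> (x @ y @ z)) =
      pairing (k + k') (sym_prod k k' a b) s"
    by (simp add: pairing_eq_sum s_def)
  also have "\<dots> = tensor_pairing k k' a b s" using pairing_sym_prod[OF sS] .
  also have "\<dots> = (\<Sum>u\<in>words k. \<Sum>v\<in>words k'. a u * b v * \<phi> (x @ u @ v @ z))"
    unfolding tensor_pairing_def s_def by (intro sum.cong refl) (simp add: append_in_words)
  finally show ?thesis .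
qed

definition tri_pairing ::
  "nat \<Rightarrow> nat \<Rightarrow> nat \<Rightarrow> (nat list \<Rightarrow> rat) \<Rightarrow> (nat list \<Rightarrow> rat) \<Rightarrow> (nat list \<Rightarrow> rat) \<Rightarrow>
    (nat list \<Rightarrow> rat) \<Rightarrow> rat" where
  "tri_pairing d1 d2 d3 a b c \<phi> =
     (\<Sum>u\<in>words d1. \<Sum>v\<in>words d2. \<Sum>w\<in>words d3. a u * b v * c w * \<phi> (u @ v @ w))"

lemma tensor_pairing_sym_prod_left:
  assumes "\<phi> \<in> symt (d1 + d2 + d3)"
  shows "tensor_pairing (d1 + d2) d3 (sym_prod d1 d2 a b) c \<phi> = tri_pairing d1 d2 d3 a b c \<phi>"
proof -
  have "tensor_pairing (d1 + d2) d3 (sym_prod d1 d2 a b) c \<phi> =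
     (\<Sum>w\<in>words d3. c w * (\<Sum>y\<in>words (d1 + d2). sym_prod d1 d2 a b y * \<phi> ([] @ y @ w)))"
    unfolding tensor_pairing_def by (simp only: sum_swap_factor append_Nil)
  also have "\<dots> = (\<Sum>w\<in>words d3. c w * (\<Sum>u\<in>words d1. \<Sum>v\<in>words d2. a u * b v * \<phi> ([] @ u @ v @ w)))"
    by (intro sum.cong refl arg_cong2[where f="(*)"] sym_prod_slice[OF assms]) auto
  also have "\<dots> = tri_pairing d1 d2 d3 a b c \<phi>"
    unfolding tri_pairing_def sum_mult_rotate3 by (intro sum.cong refl) (simp add: ac_simps)
  finally show ?thesis .
qed

lemma tensor_pairing_sym_prod_right:
  assumes "\<phi> \<in> symt (d1 + d2 + d3)"
  shows "tensor_pairing d1 (d2 + d3) a (sym_prod d2 d3 b c) \<phi> = tri_pairing d1 d2 d3 a b c \<phi>"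
proof -
  have "tensor_pairing d1 (d2 + d3) a (sym_prod d2 d3 b c) \<phi> =
     (\<Sum>u\<in>words d1. a u * (\<Sum>y\<in>words (d2 + d3). sym_prod d2 d3 b c y * \<phi> (u @ y @ [])))"
    unfolding tensor_pairing_def by (simp only: sum_factor_inner append_Nil2)
  also have "\<dots> = (\<Sum>u\<in>words d1. a u * (\<Sum>v\<in>words d2. \<Sum>w\<in>words d3. b v * c w * \<phi> (u @ v @ w @ [])))"
    by (intro sum.cong refl arg_cong2[where f="(*)"] sym_prod_slice[OF assms]) auto
  also have "\<dots> = tri_pairing d1 d2 d3 a b c \<phi>"
    unfolding tri_pairing_def sum_mult_nested3 by (intro sum.cong refl) (simp add: ac_simps)
  finally show ?thesis .
qed

lemma sym_prod_assoc:
  "sym_prod (d1 + d2) d3 (sym_prod d1 d2 a b) c = sym_prod d1 (d2 + d3) a (sym_prod d2 d3 b c)"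
proof -
  have "sym_prod (d1 + d2) d3 (sym_prod d1 d2 a b) c =
      riesz (d1 + d2 + d3) (tri_pairing d1 d2 d3 a b c)"
    unfolding sym_prod_def[of "d1 + d2" d3] by (rule riesz_cong) (rule tensor_pairing_sym_prod_left)
  moreover have "sym_prod d1 (d2 + d3) a (sym_prod d2 d3 b c) =
      riesz (d1 + d2 + d3) (tri_pairing d1 d2 d3 a b c)"
    unfolding sym_prod_def[of d1 "d2 + d3"] add.assoc[symmetric]
    by (rule riesz_cong) (rule tensor_pairing_sym_prod_right)
  ultimately show ?thesis by simp
qed

lemma sym_prod_commute: "sym_prod k l a b = fscale (eps ^ (k * l)) (sym_prod l k b a)"
proof (rule sym_prodI)
  show "fscale (eps ^ (k * l)) (sym_prod l k b a) \<in> symt (k + l)"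
    using sym_prod_in_symt[of l k b a] by (simp add: add.commute fscale_in_symt)
next
  fix \<phi> assume phi: "\<phi> \<in> symt (k + l)"
  have "tensor_pairing l k b a \<phi> =
      (\<Sum>v\<in>words l. \<Sum>u\<in>words k. b v * a u * (eps ^ (l * k) * \<phi> (u @ v)))"
    unfolding tensor_pairing_def
  proof (intro sum.cong refl arg_cong2[where f="(*)"])
    fix v u assume "v \<in> words l" "u \<in> words k"
    then show "\<phi> (v @ u) = eps ^ (l * k) * \<phi> (u @ v)"
      using symt_swap_blocks[OF phi, of "[]" v u "[]"] by (auto simp: words_def)
  qed
  also have "\<dots> = eps ^ (l * k) * tensor_pairing k l a b \<phi>"
    unfolding tensor_pairing_def by (subst sum.swap) (simp add: sum_distrib_left ac_simps)
  finally have "tensor_pairing l k b a \<phi> = eps ^ (k * l) * tensor_pairing k l a b \<phi>"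
    by (simp add: mult.commute)
  moreover have "pairing (k + l) (sym_prod l k b a) \<phi> = tensor_pairing l k b a \<phi>"
    using pairing_sym_prod[of \<phi> l k b a] phi by (simp add: add.commute)
  ultimately show "pairing (k + l) (fscale (eps ^ (k * l)) (sym_prod l k b a)) \<phi> =
      tensor_pairing k l a b \<phi>"
    using eps_power_square[of "k * l"] by (simp add: pairing_scale_left mult.assoc[symmetric])
qed

definition unit_tensor :: "nat list \<Rightarrow> rat" where
  "unit_tensor = (\<lambda>xs. if xs = [] then 1 else 0)"

lemma unit_tensor_symt: "unit_tensor \<in> symt 0"
  by (auto simp: symt_def unit_tensor_def)

lemma symt_0_eq: "t \<in> symt 0 \<Longrightarrow> t = fscale (t []) unit_tensor"
  by (auto simp: fun_eq_iff fscale_def unit_tensor_def symt_def)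

lemma sym_prod_unit_left: "a \<in> symt d \<Longrightarrow> sym_prod 0 d unit_tensor a = a"
  by (rule sym_prodI) (auto simp: tensor_pairing_def unit_tensor_def pairing_eq_sum)

lemma sym_prod_unit_right: "a \<in> symt d \<Longrightarrow> sym_prod d 0 a unit_tensor = a"
  by (rule sym_prodI) (auto simp: tensor_pairing_def unit_tensor_def pairing_eq_sum)


lemma coefficient_tensor_symt:
  assumes F_cong: "\<And>v w. (\<And>i. i < q \<Longrightarrow> v i = w i) \<Longrightarrow> F v = F w"
    and F_swap: "\<And>i j v. i < q \<Longrightarrow> j < q \<Longrightarrow> i \<noteq> j \<Longrightarrow> F (v(i := v j, j := v i)) = eps * F v"
  shows "(\<lambda>xs. if xs \<in> words q then F (\<lambda>k. e (xs ! k)) else 0) \<in> symt q"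
  unfolding symt_def
proof (intro CollectI conjI allI impI ballI)
  fix xs a b assume xs: "xs \<in> words q" and ab: "a < q" "b < q" "a \<noteq> b"
  define xs' where "xs' = xs[a := xs ! b, b := xs ! a]"
  have lx: "length xs = q" using xs by (simp add: words_def)
  have xs': "xs' \<in> words q" using xs ab lx
    by (auto simp: words_def xs'_def dest!: set_update_subset_insert[THEN subsetD])
  define w where "w = (\<lambda>k. e (xs ! k))"
  have "F (\<lambda>k. e (xs' ! k)) = F (w(a := w b, b := w a))"
    by (rule F_cong) (use ab lx in \<open>auto simp: xs'_def w_def nth_list_update\<close>)
  also have "\<dots> = eps * F w" using ab by (rule F_swap)
  finally show "(if xs[a := xs ! b, b := xs ! a] \<in> words q then F
      (\<lambda>k. e (xs[a := xs ! b, b := xs ! a] ! k)) else 0) =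
      eps * (if xs \<in> words q then F (\<lambda>k. e (xs ! k)) else 0)"
    using xs xs' by (simp add: xs'_def w_def)
qed simp

end

text \<open>\<open>word_coeff c r u\<close> is the coefficient of the word \<open>u\<close> in the tensor
  \<open>c r \<otimes> c (r + 1) \<otimes> \<dots>\<close> of degree-one tensors.\<close>

primrec word_coeff :: "(nat \<Rightarrow> nat list \<Rightarrow> rat) \<Rightarrow> nat \<Rightarrow> nat list \<Rightarrow> rat" where
  "word_coeff c r [] = 1"
| "word_coeff c r (i # w) = c r [i] * word_coeff c (Suc r) w"

lemma word_coeff_snoc: "word_coeff c r (u @ [i]) = word_coeff c r u * c (r + length u) [i]"
  by (induction u arbitrary: r) (simp_all add: ac_simps)

text \<open>The algebra lives in the degrees \<open>d p\<close> with \<open>d \<le> q = 2 m + 1\<close>; its component of degree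
  \<open>d p\<close> is \<open>symt (rank d)\<close>. For \<open>d \<le> m\<close> this is the symmetric (exterior) power of degree \<open>d\<close>;
  for \<open>d > m\<close> it stands for the dual of the component of degree \<open>(q - d) p\<close>, identified with
  \<open>symt (q - d)\<close> through \<open>pairing\<close>. The tensor \<open>f \<in> symt q\<close> carries the form \<open>F\<close>.\<close>

locale truncated_algebra = sym_tensors +
  fixes q m :: nat and f :: "nat list \<Rightarrow> rat"
  assumes q_eq: "q = 2 * m + 1" and m_pos: "1 \<le> m" and f_symt: "f \<in> symt q"
begin

definition rank :: "nat \<Rightarrow> nat" where
  "rank d = (if d \<le> m then d else q - d)"

lemma rank_0: "rank 0 = 0"
  by (simp add: rank_def)

lemma rank_1: "rank 1 = 1"
  using m_pos by (simp add: rank_def)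

lemma rank_q: "rank q = 0"
  unfolding rank_def using q_eq by simp

lemma rank_complement: "d \<le> q \<Longrightarrow> rank (q - d) = rank d"
  unfolding rank_def using q_eq by auto

definition fcontract ::
  "nat \<Rightarrow> nat \<Rightarrow> (nat list \<Rightarrow> rat) \<Rightarrow> (nat list \<Rightarrow> rat) \<Rightarrow> (nat list \<Rightarrow> rat)" where
  "fcontract k l a b = (\<lambda>xs. if xs \<in> words (q - (k + l))
     then (\<Sum>u\<in>words k. \<Sum>w\<in>words l. a u * b w * f (u @ w @ xs)) else 0)"

definition contract ::
  "nat \<Rightarrow> nat \<Rightarrow> (nat list \<Rightarrow> rat) \<Rightarrow> (nat list \<Rightarrow> rat) \<Rightarrow> (nat list \<Rightarrow> rat)" where
  "contract k j a \<phi> = (\<lambda>xs. if xs \<in> words (j - k) then (\<Sum>u\<in>words k. a u * \<phi> (u @ xs)) else 0)"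

text \<open>Two low factors multiply in the
  symmetric algebra as long as \<open>d1 + d2 \<le> m\<close>; beyond that their product is the functional
  \<open>c \<mapsto> F(a, b, c)\<close>, i.e. a contraction of \<open>f\<close>. A low factor acts on a high one (a functional)
  by contraction, and the sign \<open>eps ^ (d1 * d2)\<close> makes the product graded commutative.\<close>

definition cmult ::
  "nat \<Rightarrow> nat \<Rightarrow> (nat list \<Rightarrow> rat) \<Rightarrow> (nat list \<Rightarrow> rat) \<Rightarrow> (nat list \<Rightarrow> rat)" where
  "cmult d1 d2 a b =
    (if q < d1 + d2 then 0
     else if d1 \<le> m \<and> d2 \<le> m then
       (if d1 + d2 \<le> m then sym_prod d1 d2 a b else fcontract d1 d2 a b)
     else if d1 \<le> m then fscale (eps ^ (d1 * d2)) (contract d1 (q - d2) a b)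
     else contract d2 (q - d1) b a)"

lemma fcontract_in_symt:
  assumes "k + l \<le> q"
  shows "fcontract k l a b \<in> symt (q - (k + l))"
proof -
  have "fcontract k l a b = (\<lambda>xs. \<Sum>u\<in>words k. \<Sum>w\<in>words l.
      a u * b w * (if xs \<in> words (q - (k + l)) then f ((u @ w) @ xs @ []) else 0))"
    by (auto simp: fcontract_def fun_eq_iff)
  also have "\<dots> \<in> symt (q - (k + l))"
  proof (intro sum_apply_in_symt scaled_in_symt)
    fix u w assume "u \<in> words k" "w \<in> words l"
    then have uw: "u @ w \<in> words (k + l)" by (rule append_in_words)
    show "(\<lambda>xs. if xs \<in> words (q - (k + l)) then f ((u @ w) @ xs @ []) else 0)
      \<in> symt (q - (k + l))"
      by (rule symt_slice[OF f_symt uw]) (use assms in auto)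
  qed
  finally show ?thesis .
qed

lemma contract_in_symt:
  assumes "\<phi> \<in> symt j" "k \<le> j"
  shows "contract k j a \<phi> \<in> symt (j - k)"
proof -
  have "contract k j a \<phi> =
      (\<lambda>xs. \<Sum>u\<in>words k. a u * (if xs \<in> words (j - k) then \<phi> (u @ xs @ []) else 0))"
    by (auto simp: contract_def fun_eq_iff)
  also have "\<dots> \<in> symt (j - k)"
  proof (intro sum_apply_in_symt scaled_in_symt)
    fix u assume u: "u \<in> words k"
    show "(\<lambda>xs. if xs \<in> words (j - k) then \<phi> (u @ xs @ []) else 0) \<in> symt (j - k)"
      by (rule symt_slice[OF assms(1) u]) (use assms in auto)
  qed
  finally show ?thesis .
qed

lemma cmult_in_symt:
  assumes "a \<in> symt (rank d1)" "b \<in> symt (rank d2)" "d1 + d2 \<le> q"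
  shows "cmult d1 d2 a b \<in> symt (rank (d1 + d2))"
proof -
  consider "d1 \<le> m" "d2 \<le> m" "d1 + d2 \<le> m" | "d1 \<le> m" "d2 \<le> m" "\<not> d1 + d2 \<le> m"
    | "d1 \<le> m" "\<not> d2 \<le> m" | "\<not> d1 \<le> m" by linarith
  then show ?thesis
  proof cases
    case 1 then show ?thesis using assms by (simp add: cmult_def rank_def sym_prod_in_symt)
  next
    case 2 then show ?thesis using assms fcontract_in_symt[of d1 d2 a b]
      by (simp add: cmult_def rank_def)
  next
    case 3
    have o: "rank d2 = q - d2" "rank (d1 + d2) = q - d2 - d1" using 3 by (auto simp: rank_def)
    have "contract d1 (q - d2) a b \<in> symt (q - d2 - d1)" using 3 assms o q_eq
      by (intro contract_in_symt) auto
    then show ?thesis using 3 assms o by (auto simp: cmult_def intro!: fscale_in_symt)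
  next
    case 4
    have o: "rank d1 = q - d1" "rank (d1 + d2) = q - d1 - d2" using 4 by (auto simp: rank_def)
    have "contract d2 (q - d1) b a \<in> symt (q - d1 - d2)" using 4 assms o q_eq
      by (intro contract_in_symt) auto
    then show ?thesis using 4 assms o by (auto simp: cmult_def)
  qed
qed

lemma cmult_beyond_top: "q < d1 + d2 \<Longrightarrow> cmult d1 d2 a b = 0"
  by (simp add: cmult_def)

lemma cmult_add_left: "cmult d1 d2 (a + a') b = cmult d1 d2 a b + cmult d1 d2 a' b"
  by (auto simp: cmult_def sym_prod_add_left fcontract_def contract_def fscale_def fun_eq_iff
      sum.distrib algebra_simps)
lemma cmult_add_right: "cmult d1 d2 a (b + b') = cmult d1 d2 a b + cmult d1 d2 a b'"
  by (auto simp: cmult_def sym_prod_add_right fcontract_def contract_def fscale_def fun_eq_iff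
      sum.distrib algebra_simps)
lemma cmult_scale_left: "cmult d1 d2 (fscale c a) b = fscale c (cmult d1 d2 a b)"
  unfolding cmult_def sym_prod_scale_left
    by (auto simp: fcontract_def contract_def fscale_def fun_eq_iff sum_distrib_left algebra_simps)
lemma cmult_scale_right: "cmult d1 d2 a (fscale c b) = fscale c (cmult d1 d2 a b)"
  unfolding cmult_def sym_prod_scale_right
    by (auto simp: fcontract_def contract_def fscale_def fun_eq_iff sum_distrib_left algebra_simps)

lemma cmult_zero_left [simp]: "cmult d1 d2 0 b = 0"
  using cmult_scale_left[of d1 d2 0 0 b] by simp
lemma cmult_zero_right [simp]: "cmult d1 d2 a 0 = 0"
  using cmult_scale_right[of d1 d2 a 0 0] by simp

definition tri_fcontract ::
  "nat \<Rightarrow> nat \<Rightarrow> nat \<Rightarrow> (nat list \<Rightarrow> rat) \<Rightarrow> (nat list \<Rightarrow> rat) \<Rightarrow> (nat list \<Rightarrow> rat) \<Rightarrow>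
    (nat list \<Rightarrow> rat)" where
  "tri_fcontract d1 d2 d3 a b c = (\<lambda>xs. if xs \<in> words (q - (d1 + d2 + d3)) then
     (\<Sum>u\<in>words d1. \<Sum>v\<in>words d2. \<Sum>w\<in>words d3. a u * b v * c w * f (u @ v @ w @ xs)) else 0)"

lemma fcontract_sym_left:
  assumes "d1 + d2 + d3 \<le> q"
  shows "fcontract (d1 + d2) d3 (sym_prod d1 d2 a b) c = tri_fcontract d1 d2 d3 a b c"
    (is "?L = ?R")
proof
  fix xs
  show "?L xs = ?R xs"
  proof (cases "xs \<in> words (q - (d1 + d2 + d3))")
    case True
    have "fcontract (d1 + d2) d3 (sym_prod d1 d2 a b) c xs =
      (\<Sum>w\<in>words d3. c w * (\<Sum>y\<in>words (d1 + d2). sym_prod d1 d2 a b y * f ([] @ y @ (w @ xs))))"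
      using True by (simp add: fcontract_def add.assoc sum_swap_factor)
    also have "\<dots> = (\<Sum>w\<in>words d3. c w *
        (\<Sum>u\<in>words d1. \<Sum>v\<in>words d2. a u * b v * f ([] @ u @ v @ (w @ xs))))"
      by (intro sum.cong refl arg_cong2[where f="(*)"] sym_prod_slice[OF f_symt])
         (use True assms in \<open>auto intro: append_in_words\<close>)
    also have "\<dots> = tri_fcontract d1 d2 d3 a b c xs"
      unfolding tri_fcontract_def sum_mult_rotate3 using True
        by (auto intro!: sum.cong simp: ac_simps)
    finally show ?thesis .
  qed (simp add: fcontract_def tri_fcontract_def add.assoc)
qed

lemma fcontract_sym_right:
  assumes "d1 + d2 + d3 \<le> q"
  shows "fcontract d1 (d2 + d3) a (sym_prod d2 d3 b c) = tri_fcontract d1 d2 d3 a b c"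
    (is "?L = ?R")
proof
  fix xs
  show "?L xs = ?R xs"
  proof (cases "xs \<in> words (q - (d1 + d2 + d3))")
    case True
    have "fcontract d1 (d2 + d3) a (sym_prod d2 d3 b c) xs =
      (\<Sum>u\<in>words d1. a u * (\<Sum>y\<in>words (d2 + d3). sym_prod d2 d3 b c y * f (u @ y @ xs)))"
      using True by (simp add: fcontract_def add.assoc sum_factor_inner)
    also have "\<dots> = (\<Sum>u\<in>words d1. a u * (\<Sum>v\<in>words d2. \<Sum>w\<in>words d3. b v * c w * f (u @ v @ w @ xs)))"
      by (intro sum.cong refl arg_cong2[where f="(*)"] sym_prod_slice[OF f_symt])
         (use True assms in \<open>auto intro: append_in_words\<close>)
    also have "\<dots> = tri_fcontract d1 d2 d3 a b c xs"
      unfolding tri_fcontract_def sum_mult_nested3 using True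
        by (auto intro!: sum.cong simp: ac_simps)
    finally show ?thesis .
  qed (simp add: fcontract_def tri_fcontract_def add.assoc)
qed

lemma contract_fcontract_left:
  assumes "d1 + d2 + d3 \<le> q"
  shows "contract d3 (q - (d1 + d2)) c (fcontract d1 d2 a b) = tri_fcontract d1 d2 d3 a b c"
    (is "?L = ?R")
proof
  fix xs
  have e: "q - (d1 + d2) - d3 = q - (d1 + d2 + d3)" by simp
  show "?L xs = ?R xs"
  proof (cases "xs \<in> words (q - (d1 + d2 + d3))")
    case True
    have wx: "w \<in> words d3 \<Longrightarrow> w @ xs \<in> words (q - (d1 + d2))" for w
      using append_in_words[OF _ True, of w d3] assms by (simp add: add.commute)
    have "contract d3 (q - (d1 + d2)) c (fcontract d1 d2 a b) xs =
      (\<Sum>w\<in>words d3. c w * (\<Sum>u\<in>words d1. \<Sum>v\<in>words d2. a u * b v * f (u @ v @ w @ xs)))"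
      using True wx by (auto simp: contract_def fcontract_def e intro!: sum.cong)
    also have "\<dots> = tri_fcontract d1 d2 d3 a b c xs"
      unfolding tri_fcontract_def sum_mult_rotate3 using True
        by (auto intro!: sum.cong simp: ac_simps)
    finally show ?thesis .
  qed (simp add: contract_def tri_fcontract_def e)
qed

lemma contract_fcontract_right:
  assumes "d1 + d2 + d3 \<le> q"
  shows "fscale (eps ^ (d1 * (d2 + d3))) (contract d1 (q - (d2 + d3)) a (fcontract d2 d3 b c)) =
      tri_fcontract d1 d2 d3 a b c" (is "?L = ?R")
proof
  fix xs
  have e: "q - (d2 + d3) - d1 = q - (d1 + d2 + d3)" "d2 + d3 + d1 = d1 + d2 + d3" by simp_all
  show "?L xs = ?R xs"
  proof (cases "xs \<in> words (q - (d1 + d2 + d3))")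
    case True
    have ux: "u \<in> words d1 \<Longrightarrow> u @ xs \<in> words (q - (d2 + d3))" for u
      using append_in_words[OF _ True, of u d1] assms by (simp add: add.commute)
    have blk: "f ([] @ (v @ w) @ u @ xs) = eps ^ ((d2 + d3) * d1) * f ([] @ u @ (v @ w) @ xs)"
      if "u \<in> words d1" "v \<in> words d2" "w \<in> words d3" for u v w
    proof -
      have "[] @ (v @ w) @ u @ xs \<in> words q" using that True assms
        by (auto simp: words_def)
      then show ?thesis using symt_swap_blocks[OF f_symt, of "[]" "v @ w" u xs] that
        by (simp add: length_in_words)
    qed
    have "fscale (eps ^ (d1 * (d2 + d3))) (contract d1 (q - (d2 + d3)) a (fcontract d2 d3 b c)) xs =
      eps ^ (d1 * (d2 + d3)) * (\<Sum>u\<in>words d1. a u *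
          (\<Sum>v\<in>words d2. \<Sum>w\<in>words d3. b v * c w * f ([] @ (v @ w) @ u @ xs)))"
      using True ux by (auto simp: fscale_def contract_def fcontract_def e intro!: sum.cong)
    also have "\<dots> = eps ^ (d1 * (d2 + d3)) *
        (\<Sum>u\<in>words d1. a u * (\<Sum>v\<in>words d2. \<Sum>w\<in>words d3. b v * c w *
         (eps ^ ((d2 + d3) * d1) * f (u @ v @ w @ xs))))"
      using blk by (auto intro!: sum.cong arg_cong2[where f="(*)"])
    also have "\<dots> = (eps ^ (d1 * (d2 + d3)) * eps ^ (d1 * (d2 + d3))) *
        (\<Sum>u\<in>words d1. a u * (\<Sum>v\<in>words d2. \<Sum>w\<in>words d3. b v * c w *
         f (u @ v @ w @ xs)))"
      by (simp add: sum_distrib_left ac_simps)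
    also have "\<dots> = tri_fcontract d1 d2 d3 a b c xs"
      unfolding eps_power_square tri_fcontract_def sum_mult_nested3 using True
        by (auto intro!: sum.cong simp: ac_simps)
    finally show ?thesis .
  qed (simp add: contract_def tri_fcontract_def e fscale_def)
qed

lemma contract_contract_sym_prod:
  assumes "d1 + d2 + d3 \<le> q" "a \<in> symt (q - d1)"
  shows "contract d3 (q - (d1 + d2)) c (contract d2 (q - d1) b a) =
      contract (d2 + d3) (q - d1) (sym_prod d2 d3 b c) a" (is "?L = ?R")
proof
  fix xs
  have e: "q - (d1 + d2) - d3 = q - (d1 + d2 + d3)" "q - d1 - (d2 + d3) = q - (d1 + d2 + d3)"
    by simp_all
  show "?L xs = ?R xs"
  proof (cases "xs \<in> words (q - (d1 + d2 + d3))")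
    case True
    have wx: "w \<in> words d3 \<Longrightarrow> w @ xs \<in> words (q - d1 - d2)" for w
      using append_in_words[OF _ True, of w d3] assms by (simp add: add.commute)
    have "contract d3 (q - (d1 + d2)) c (contract d2 (q - d1) b a) xs =
        (\<Sum>w\<in>words d3. c w * (\<Sum>v\<in>words d2. b v * a (v @ w @ xs)))"
      using True wx by (auto simp: contract_def e intro!: sum.cong)
    also have "\<dots> = (\<Sum>v\<in>words d2. \<Sum>w\<in>words d3. b v * c w * a ([] @ v @ w @ xs))"
      by (simp add: sum_swap_mult)
    also have "\<dots> = (\<Sum>y\<in>words (d2 + d3). sym_prod d2 d3 b c y * a ([] @ y @ xs))"
      by (rule sym_prod_slice[OF assms(2), where i=0 and l="q - (d1 + d2 + d3)", symmetric])
          (use True assms in auto)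
    also have "\<dots> = contract (d2 + d3) (q - d1) (sym_prod d2 d3 b c) a xs"
      using True by (simp add: contract_def e add_ac)
    finally show ?thesis .
  qed (simp add: contract_def e add_ac)
qed

lemma contract_contract_commute:
  assumes "d1 + d2 + d3 \<le> q" "b \<in> symt (q - d2)"
  shows "contract d3 (q - (d1 + d2)) c (fscale (eps ^ (d1 * d2)) (contract d1 (q - d2) a b)) =
         fscale (eps ^ (d1 * (d2 + d3))) (contract d1 (q - (d2 + d3)) a (contract d3 (q - d2) c b))"
    (is "?L = ?R")
proof
  fix xs
  have e: "q - (d1 + d2) - d3 = q - (d1 + d2 + d3)" "q - (d2 + d3) - d1 = q - (d1 + d2 + d3)"
    "q - d2 - d1 = q - (d1 + d2)" "q - d2 - d3 = q - (d2 + d3)"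
    "d2 + d1 = d1 + d2" "d3 + d2 = d2 + d3" "d2 + d3 + d1 = d1 + d2 + d3"
    by simp_all
  show "?L xs = ?R xs"
  proof (cases "xs \<in> words (q - (d1 + d2 + d3))")
    case True
    have wx: "w \<in> words d3 \<Longrightarrow> w @ xs \<in> words (q - (d1 + d2))" for w
      using append_in_words[OF _ True, of w d3] assms by (simp add: add.commute)
    have ux: "u \<in> words d1 \<Longrightarrow> u @ xs \<in> words (q - (d2 + d3))" for u
      using append_in_words[OF _ True, of u d1] assms by (simp add: add.commute)
    have blk: "b ([] @ w @ u @ xs) = eps ^ (d3 * d1) * b ([] @ u @ w @ xs)"
      if "u \<in> words d1" "w \<in> words d3" for u w
    proof -
      have "[] @ w @ u @ xs \<in> words (q - d2)" using that True assms by (auto simp: words_def)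
      then show ?thesis using symt_swap_blocks[OF assms(2), of "[]" w u xs] that
        by (simp add: length_in_words)
    qed
    have "contract d3 (q - (d1 + d2)) c (fscale (eps ^ (d1 * d2)) (contract d1 (q - d2) a b)) xs =
       (\<Sum>w\<in>words d3. c w * (eps ^ (d1 * d2) * (\<Sum>u\<in>words d1. a u * b (u @ w @ xs))))"
      using True wx by (auto simp: contract_def fscale_def e intro!: sum.cong)
    also have "\<dots> = eps ^ (d1 * d2) * (\<Sum>u\<in>words d1. \<Sum>w\<in>words d3. a u * c w * b (u @ w @ xs))"
      by (simp add: sum_distrib_left ac_simps) (rule sum.swap)
    also have "\<dots> = eps ^ (d1 * (d2 + d3)) *
        (\<Sum>u\<in>words d1. a u * (\<Sum>w\<in>words d3. c w * b ([] @ w @ u @ xs)))"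
    proof -
      have "eps ^ (d1 * (d2 + d3)) * (\<Sum>u\<in>words d1. a u * (\<Sum>w\<in>words d3. c w * b ([] @ w @ u @ xs))) =
        eps ^ (d1 * (d2 + d3)) * (\<Sum>u\<in>words d1. a u *
            (\<Sum>w\<in>words d3. c w * (eps ^ (d3 * d1) * b ([] @ u @ w @ xs))))"
        using blk by (auto intro!: sum.cong arg_cong2[where f="(*)"])
      also have "\<dots> = eps ^ (d1 * (d2 + d3) + d3 * d1) *
          (\<Sum>u\<in>words d1. \<Sum>w\<in>words d3. a u * c w * b (u @ w @ xs))"
        by (simp add: power_add sum_distrib_left ac_simps)
      also have "d1 * (d2 + d3) + d3 * d1 = d1 * d2 + 2 * (d1 * d3)" by (simp add: algebra_simps)
      finally show ?thesis by (simp add: eps_power_add_even)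
    qed
    also have "\<dots> = fscale (eps ^ (d1 * (d2 + d3)))
        (contract d1 (q - (d2 + d3)) a (contract d3 (q - d2) c b)) xs"
      using True ux by (auto simp: contract_def fscale_def e add_ac intro!: sum.cong)
    finally show ?thesis .
  qed (simp add: contract_def fscale_def e add_ac)
qed

lemma contract_sym_prod_contract:
  assumes "d1 + d2 + d3 \<le> q" "c \<in> symt (q - d3)"
  shows "fscale (eps ^ ((d1 + d2) * d3)) (contract (d1 + d2) (q - d3) (sym_prod d1 d2 a b) c) =
         fscale (eps ^ (d1 * (d2 + d3)))
             (contract d1 (q - (d2 + d3)) a (fscale (eps ^ (d2 * d3)) (contract d2 (q - d3) b c)))"
    (is "?L = ?R")
proof
  fix xs
  have e: "q - d3 - (d1 + d2) = q - (d1 + d2 + d3)" "q - (d2 + d3) - d1 = q - (d1 + d2 + d3)"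
    "q - d3 - d2 = q - (d2 + d3)" "d3 + (d1 + d2) = d1 + d2 + d3" "d3 + d2 = d2 + d3" by simp_all
  show "?L xs = ?R xs"
  proof (cases "xs \<in> words (q - (d1 + d2 + d3))")
    case True
    have ux: "u \<in> words d1 \<Longrightarrow> u @ xs \<in> words (q - (d2 + d3))" for u
      using append_in_words[OF _ True, of u d1] assms by (simp add: add.commute)
    have blk: "c ([] @ v @ u @ xs) = eps ^ (d2 * d1) * c ([] @ u @ v @ xs)"
      if "u \<in> words d1" "v \<in> words d2" for u v
    proof -
      have "[] @ v @ u @ xs \<in> words (q - d3)" using that True assms by (auto simp: words_def)
      then show ?thesis using symt_swap_blocks[OF assms(2), of "[]" v u xs] that
        by (simp add: length_in_words)
    qed
    have "fscale (eps ^ ((d1 + d2) * d3)) (contract (d1 + d2) (q - d3) (sym_prod d1 d2 a b) c) xs =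
      eps ^ ((d1 + d2) * d3) * (\<Sum>y\<in>words (d1 + d2). sym_prod d1 d2 a b y * c ([] @ y @ xs))"
      using True by (simp add: contract_def fscale_def e)
    also have "\<dots> = eps ^ ((d1 + d2) * d3) *
        (\<Sum>u\<in>words d1. \<Sum>v\<in>words d2. a u * b v * c ([] @ u @ v @ xs))"
      by (subst sym_prod_slice[OF assms(2), where i=0 and l="q - (d1 + d2 + d3)"])
          (use True assms in auto)
    also have "\<dots> = eps ^ (d1 * (d2 + d3)) *
        (\<Sum>u\<in>words d1. a u * (eps ^ (d2 * d3) * (\<Sum>v\<in>words d2. b v * c ([] @ v @ u @ xs))))"
    proof -
      have "eps ^ (d1 * (d2 + d3)) *
          (\<Sum>u\<in>words d1. a u * (eps ^ (d2 * d3) * (\<Sum>v\<in>words d2. b v * c ([] @ v @ u @ xs)))) =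
        eps ^ (d1 * (d2 + d3)) * (\<Sum>u\<in>words d1. a u *
            (eps ^ (d2 * d3) * (\<Sum>v\<in>words d2. b v * (eps ^ (d2 * d1) * c ([] @ u @ v @ xs)))))"
        using blk by (auto intro!: sum.cong arg_cong2[where f="(*)"])
      also have "\<dots> = eps ^ (d1 * (d2 + d3) + d2 * d3 + d2 * d1) *
          (\<Sum>u\<in>words d1. \<Sum>v\<in>words d2. a u * b v * c (u @ v @ xs))"
        by (simp add: power_add sum_distrib_left ac_simps)
      also have "d1 * (d2 + d3) + d2 * d3 + d2 * d1 = (d1 + d2) * d3 + 2 * (d1 * d2)"
        by (simp add: algebra_simps)
      finally show ?thesis by (simp add: eps_power_add_even)
    qed
    also have "\<dots> = fscale (eps ^ (d1 * (d2 + d3)))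
        (contract d1 (q - (d2 + d3)) a (fscale (eps ^ (d2 * d3)) (contract d2 (q - d3) b c))) xs"
      using True ux by (auto simp: contract_def fscale_def e add_ac intro!: sum.cong)
    finally show ?thesis .
  qed (simp add: contract_def fscale_def e add_ac)
qed

lemma cmult_assoc_low:
  assumes "d1 \<le> m" "d2 \<le> m" "d3 \<le> m" "d1 + d2 + d3 \<le> q"
  shows "cmult (d1 + d2) d3 (cmult d1 d2 a b) c = cmult d1 (d2 + d3) a (cmult d2 d3 b c)"
proof (cases "d1 + d2 + d3 \<le> m")
  case True
  then show ?thesis using assms by (simp add: cmult_def sym_prod_assoc)
next
  case False
  have "cmult (d1 + d2) d3 (cmult d1 d2 a b) c = tri_fcontract d1 d2 d3 a b c"
    using False assms
    by (cases "d1 + d2 \<le> m") (simp_all add: cmult_def fcontract_sym_left contract_fcontract_left)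
  moreover have "cmult d1 (d2 + d3) a (cmult d2 d3 b c) = tri_fcontract d1 d2 d3 a b c"
    using False assms
    by (cases "d2 + d3 \<le> m") (simp_all add: cmult_def fcontract_sym_right contract_fcontract_right
        add.assoc)
  ultimately show ?thesis by simp
qed

lemma cmult_assoc:
  assumes a: "a \<in> symt (rank d1)" and b: "b \<in> symt (rank d2)" and c: "c \<in> symt (rank d3)"
  shows "cmult (d1 + d2) d3 (cmult d1 d2 a b) c = cmult d1 (d2 + d3) a (cmult d2 d3 b c)"
proof (cases "q < d1 + d2 + d3")
  case True
  then show ?thesis by (simp add: cmult_beyond_top add.assoc)
next
  case False
  then have s: "d1 + d2 + d3 \<le> q" by simp
  consider "d1 \<le> m" "d2 \<le> m" "d3 \<le> m" | "\<not> d1 \<le> m" | "\<not> d2 \<le> m" | "\<not> d3 \<le> m" by blast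
  \<comment> \<open>as \<open>q = 2 m + 1\<close>, if one degree exceeds \<open>m\<close> then the other two sum to at most \<open>m\<close>\<close>
  then show ?thesis
  proof cases
    case 1
    then show ?thesis using s by (rule cmult_assoc_low)
  next
    case 2
    have low: "d2 + d3 \<le> m" "d2 \<le> m" "d3 \<le> m" using 2 s q_eq by auto
    have a': "a \<in> symt (q - d1)" using 2 a by (auto simp: rank_def)
    show ?thesis using 2 low s contract_contract_sym_prod[OF s a'] by (simp add: cmult_def add.assoc)
  next
    case 3
    have low: "d1 + d3 \<le> m" "d1 \<le> m" "d3 \<le> m" using 3 s q_eq by auto
    have b': "b \<in> symt (q - d2)" using 3 b by (auto simp: rank_def)
    show ?thesis using 3 low s contract_contract_commute[OF s b'] by (simp add: cmult_def add.assoc)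
  next
    case 4
    have low: "d1 + d2 \<le> m" "d1 \<le> m" "d2 \<le> m" using 4 s q_eq by auto
    have c': "c \<in> symt (q - d3)" using 4 c by (auto simp: rank_def)
    show ?thesis using 4 low s contract_sym_prod_contract[OF s c'] by (simp add: cmult_def add.assoc)
  qed
qed

lemma fcontract_commute:
  assumes "k + l \<le> q"
  shows "fcontract k l a b = fscale (eps ^ (k * l)) (fcontract l k b a)" (is "?L = ?R")
proof
  fix xs
  show "?L xs = ?R xs"
  proof (cases "xs \<in> words (q - (k + l))")
    case True
    have "fcontract l k b a xs =
        (\<Sum>v\<in>words l. \<Sum>u\<in>words k. b v * a u * (eps ^ (l * k) * f (u @ v @ xs)))"
      unfolding fcontract_def using True
    proof (simp add: add.commute, intro sum.cong refl arg_cong2[where f="(*)"])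
      fix v u assume "v \<in> words l" "u \<in> words k"
      then show "f (v @ u @ xs) = eps ^ (l * k) * f (u @ v @ xs)"
        using symt_swap_blocks[OF f_symt, of "[]" v u xs] True assms by (auto simp: words_def)
    qed
    also have "\<dots> = eps ^ (l * k) * fcontract k l a b xs"
      unfolding fcontract_def using True by (subst sum.swap) (simp add: sum_distrib_left ac_simps)
    finally show ?thesis
      using eps_power_square[of "k * l"]
        by (simp add: fscale_def mult.assoc[symmetric] mult.commute)
  qed (simp add: fcontract_def fscale_def add.commute)
qed

lemma cmult_commute: "cmult d1 d2 a b = fscale (eps ^ (d1 * d2)) (cmult d2 d1 b a)"
proof (cases "q < d1 + d2")
  case True then show ?thesis by (simp add: cmult_def)
next
  case False
  have ee: "eps ^ (d1 * d2) * eps ^ (d2 * d1) = 1"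
    using eps_power_square[of "d1 * d2"] by (simp add: mult.commute)
  consider "d1 \<le> m" "d2 \<le> m" | "d1 \<le> m" "\<not> d2 \<le> m" | "\<not> d1 \<le> m" "d2 \<le> m"
    using False q_eq by linarith
  then show ?thesis
  proof cases
    case 1
    then show ?thesis using False
      by (simp add: cmult_def add.commute sym_prod_commute[of d1 d2] fcontract_commute[of d1 d2])
  next
    case 2
    then show ?thesis using False by (simp add: cmult_def add.commute mult.commute)
  next
    case 3
    then show ?thesis using False ee by (simp add: cmult_def add.commute fscale_fscale mult.commute)
  qed
qed

lemma cmult_unit_left:
  assumes "a \<in> symt (rank d)" "d \<le> q"
  shows "cmult 0 d unit_tensor a = a"
proof (cases "d \<le> m")
  case True
  then show ?thesis using assms by (simp add: cmult_def rank_def sym_prod_unit_left)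
next
  case False
  then show ?thesis using assms
    by (auto simp: cmult_def rank_def contract_def unit_tensor_def fun_eq_iff symt_outside)
qed

lemma cmult_unit_right:
  assumes "a \<in> symt (rank d)" "d \<le> q"
  shows "cmult d 0 a unit_tensor = a"
proof (cases "d \<le> m")
  case True
  then show ?thesis using assms by (simp add: cmult_def rank_def sym_prod_unit_right)
next
  case False
  then show ?thesis using assms
    by (auto simp: cmult_def rank_def contract_def unit_tensor_def fun_eq_iff symt_outside)
qed

lemma cmult_complement:
  assumes "d \<le> q"
  shows "cmult d (q - d) a b =
      (\<lambda>xs. if xs = [] then (if d \<le> m then eps ^ (d * (q - d)) else 1) *
          pairing (rank d) a b else 0)"
proof (cases "d \<le> m")
  case True
  then have "\<not> q - d \<le> m" using q_eq by simp
  then show ?thesis using True assms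
    by (auto simp: cmult_def contract_def fscale_def pairing_eq_sum rank_def fun_eq_iff words_def)
next
  case False
  then have "q - d \<le> m" using q_eq by simp
  then show ?thesis using False assms
    by (auto simp: cmult_def contract_def fscale_def pairing_eq_sum rank_def fun_eq_iff words_def
        mult.commute)
qed

text \<open>The degree-\<open>d\<close> component \<open>t\<close> is stored in \<open>qvec = nat \<Rightarrow> rat\<close> at the codes
  \<open>list_encode (d # xs)\<close> of the words \<open>xs\<close>.\<close>

definition component :: "nat \<Rightarrow> qvec \<Rightarrow> (nat list \<Rightarrow> rat)" where
  "component d x = (\<lambda>xs. x (list_encode (d # xs)))"

definition embed :: "nat \<Rightarrow> (nat list \<Rightarrow> rat) \<Rightarrow> qvec" where
  "embed d t = (\<lambda>N. case list_decode N of [] \<Rightarrow> 0 | d' # xs \<Rightarrow> if d' = d \<and> d \<le> q then t xs else 0)"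

definition alg_mult :: "qvec \<Rightarrow> qvec \<Rightarrow> qvec" where
  "alg_mult x y = (\<Sum>d1\<le>q. \<Sum>d2\<le>q. embed (d1 + d2) (cmult d1 d2 (component d1 x) (component d2 y)))"

definition alg_one :: qvec where "alg_one = embed 0 unit_tensor"

definition top_coeff :: "qvec \<Rightarrow> rat" where "top_coeff x = x (list_encode [q])"

lemma component_embed: "component d (embed d' t) = (if d = d' \<and> d' \<le> q then t else 0)"
  by (auto simp: component_def embed_def fun_eq_iff)

lemma top_coeff_embed: "top_coeff (embed q t) = t []"
  by (simp add: top_coeff_def embed_def)

lemma embed_add: "embed d (s + t) = embed d s + embed d t"
  by (auto simp: embed_def fun_eq_iff split: list.split)
lemma embed_fscale: "embed d (fscale c t) = fscale c (embed d t)"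
  by (auto simp: embed_def fun_eq_iff fscale_def split: list.split)
lemma embed_zero[simp]: "embed d 0 = 0"
  by (auto simp: embed_def fun_eq_iff split: list.split)
lemma module_hom_embed: "module_hom fscale fscale (embed d)"
  by unfold_locales (auto simp: embed_add embed_fscale)

lemma component_add: "component d (x + y) = component d x + component d y"
  by (simp add: component_def fun_eq_iff)
lemma component_fscale: "component d (fscale c x) = fscale c (component d x)"
  by (simp add: component_def fscale_def fun_eq_iff)
lemma component_zero [simp]: "component d 0 = 0"
  by (simp add: component_def fun_eq_iff)
lemma component_sum: "component d (sum x I) = (\<Sum>i\<in>I. component d (x i))"
  by (auto simp: component_def fun_eq_iff sum_fun_apply)

lemma embed_inject: "d \<le> q \<Longrightarrow> embed d s = embed d t \<Longrightarrow> s = t"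
  by (metis component_embed)

lemma alg_mult_embed: "alg_mult (embed d1 a) (embed d2 b) = embed (d1 + d2) (cmult d1 d2 a b)"
proof (cases "d1 \<le> q \<and> d2 \<le> q")
  case True
  have "alg_mult (embed d1 a) (embed d2 b) = (\<Sum>e1\<le>q. \<Sum>e2\<le>q.
      if e1 = d1 then (if e2 = d2 then embed (d1 + d2) (cmult d1 d2 a b) else 0) else 0)"
    unfolding alg_mult_def component_embed using True by (intro sum.cong refl) auto
  also have "\<dots> = (\<Sum>e1\<le>q. if e1 = d1 then embed (d1 + d2) (cmult d1 d2 a b) else 0)"
    using True by (intro sum.cong refl) (simp add: sum.delta)
  also have "\<dots> = embed (d1 + d2) (cmult d1 d2 a b)" using True by (simp add: sum.delta)
  finally show ?thesis .
next
  case False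
  have "alg_mult (embed d1 a) (embed d2 b) = 0"
    unfolding alg_mult_def component_embed using False by (intro sum.neutral ballI) auto
  moreover have "cmult d1 d2 a b = 0" using False by (intro cmult_beyond_top) auto
  ultimately show ?thesis by simp
qed

lemma alg_mult_add_left: "alg_mult (x + y) z = alg_mult x z + alg_mult y z"
  by (simp add: alg_mult_def component_add cmult_add_left embed_add sum.distrib)
lemma alg_mult_add_right: "alg_mult z (x + y) = alg_mult z x + alg_mult z y"
  by (simp add: alg_mult_def component_add cmult_add_right embed_add sum.distrib)
lemma alg_mult_scale_left: "alg_mult (fscale c x) z = fscale c (alg_mult x z)"
  by (simp add: alg_mult_def component_fscale cmult_scale_left embed_fscale fscale_sum)
lemma alg_mult_scale_right: "alg_mult z (fscale c x) = fscale c (alg_mult z x)"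
  by (simp add: alg_mult_def component_fscale cmult_scale_right embed_fscale fscale_sum)
lemma alg_mult_zero [simp]: "alg_mult 0 z = 0" "alg_mult z 0 = 0"
  by (simp_all add: alg_mult_def)
lemma alg_mult_sum_left: "alg_mult (sum x I) z = (\<Sum>i\<in>I. alg_mult (x i) z)"
proof (cases "finite I")
  case True then show ?thesis
    by (rule finite_induct[where P="\<lambda>I. alg_mult (sum x I) z = (\<Sum>i\<in>I. alg_mult (x i) z)"])
       (simp_all add: alg_mult_add_left)
qed simp
lemma alg_mult_sum_right: "alg_mult z (sum x I) = (\<Sum>i\<in>I. alg_mult z (x i))"
proof (cases "finite I")
  case True then show ?thesis
    by (rule finite_induct[where P="\<lambda>I. alg_mult z (sum x I) = (\<Sum>i\<in>I. alg_mult z (x i))"])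
       (simp_all add: alg_mult_add_right)
qed simp

definition well_graded :: "qvec set" where
  "well_graded = {x. x = (\<Sum>d\<le>q. embed d (component d x)) \<and> (\<forall>d\<le>q. component d x \<in> symt (rank d))}"

lemma zero_well_graded: "0 \<in> well_graded" by (simp add: well_graded_def)
lemma add_well_graded: "x \<in> well_graded \<Longrightarrow> y \<in> well_graded \<Longrightarrow> x + y \<in> well_graded"
  unfolding well_graded_def by (auto simp: component_add embed_add sum.distrib add_in_symt)
lemma sum_well_graded: "(\<And>i. i \<in> I \<Longrightarrow> x i \<in> well_graded) \<Longrightarrow> sum x I \<in> well_graded"
  by (induction I rule: infinite_finite_induct) (simp_all add: zero_well_graded add_well_graded)
lemma embed_well_graded: assumes "t \<in> symt (rank d)" "d \<le> q" shows "embed d t \<in> well_graded"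
proof -
  have "(\<Sum>da\<le>q. embed da (if da = d \<and> d \<le> q then t else 0)) =
      (\<Sum>da\<le>q. if da = d then embed d t else 0)"
    by (intro sum.cong refl) auto
  also have "\<dots> = embed d t" using assms by (simp add: sum.delta)
  finally show ?thesis using assms by (simp add: well_graded_def component_embed)
qed

lemma well_graded_eq_sum: "x \<in> well_graded \<Longrightarrow> x = (\<Sum>d\<le>q. embed d (component d x))"
  by (simp add: well_graded_def)
lemma well_graded_component: "x \<in> well_graded \<Longrightarrow> d \<le> q \<Longrightarrow> component d x \<in> symt (rank d)"
  by (simp add: well_graded_def)

lemma alg_mult_embed_left: assumes "z \<in> well_graded"
  shows "alg_mult (embed e X) z = (\<Sum>d\<le>q. embed (e + d) (cmult e d X (component d z)))"
proof -
  have "alg_mult (embed e X) z = alg_mult (embed e X) (\<Sum>d\<le>q. embed d (component d z))"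
    by (rule arg_cong[OF well_graded_eq_sum[OF assms]])
  then show ?thesis by (simp add: alg_mult_sum_right alg_mult_embed)
qed

lemma alg_mult_embed_right: assumes "x \<in> well_graded"
  shows "alg_mult x (embed e Y) = (\<Sum>d\<le>q. embed (d + e) (cmult d e (component d x) Y))"
proof -
  have "alg_mult x (embed e Y) = alg_mult (\<Sum>d\<le>q. embed d (component d x)) (embed e Y)"
    by (rule arg_cong[OF well_graded_eq_sum[OF assms], where f="\<lambda>u. alg_mult u (embed e Y)"])
  then show ?thesis by (simp add: alg_mult_sum_left alg_mult_embed)
qed

lemma alg_mult_assoc:
  assumes x: "x \<in> well_graded" and y: "y \<in> well_graded" and z: "z \<in> well_graded"
  shows "alg_mult (alg_mult x y) z = alg_mult x (alg_mult y z)"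
proof -
  have "alg_mult (alg_mult x y) z = (\<Sum>d1\<le>q. \<Sum>d2\<le>q. \<Sum>d3\<le>q.
      embed (d1 + d2 + d3) (cmult (d1 + d2) d3 (cmult d1 d2 (component d1 x) (component d2 y))
          (component d3 z)))"
    unfolding alg_mult_def[of x y] alg_mult_sum_left alg_mult_embed_left[OF z] ..
  also have "\<dots> = (\<Sum>d1\<le>q. \<Sum>d2\<le>q. \<Sum>d3\<le>q.
      embed (d1 + (d2 + d3)) (cmult d1 (d2 + d3) (component d1 x)
          (cmult d2 d3 (component d2 y) (component d3 z))))"
    using x y z by (intro sum.cong refl) (simp add: cmult_assoc well_graded_component add.assoc)
  also have "\<dots> = alg_mult x (alg_mult y z)"
    unfolding alg_mult_def[of y z] alg_mult_sum_right alg_mult_embed_right[OF x]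
      by (rule sum_rotate3)
  finally show ?thesis .
qed

definition partial_product :: "(nat \<Rightarrow> nat list \<Rightarrow> rat) \<Rightarrow> nat \<Rightarrow> qvec" where
  "partial_product c j = foldr alg_mult (map (\<lambda>k. embed 1 (c k)) [q - j..<q]) alg_one"

definition coeff_contract :: "(nat \<Rightarrow> nat list \<Rightarrow> rat) \<Rightarrow> nat \<Rightarrow> nat list \<Rightarrow> rat" where
  "coeff_contract c j =
     (\<lambda>xs. if xs \<in> words (q - j) then (\<Sum>u\<in>words j. word_coeff c (q - j) u * f (u @ xs)) else 0)"

lemma partial_product_Suc:
  assumes "j < q"
  shows "partial_product c (Suc j) = alg_mult (embed 1 (c (q - Suc j))) (partial_product c j)"
proof -
  have "[q - Suc j..<q] = (q - Suc j) # [q - j..<q]"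
    using assms by (simp add: upt_conv_Cons Suc_diff_Suc)
  then show ?thesis by (simp add: partial_product_def)
qed

lemma cons_factor_slice:
  assumes "\<forall>\<psi>\<in>symt j. pairing j X \<psi> = pairing j (word_coeff c (Suc r)) \<psi>"
    and "\<phi> \<in> symt (Suc j + l)" "z \<in> words l"
  shows "(\<Sum>i<n. c r [i] * (\<Sum>w\<in>words j. X w * \<phi> ([i] @ w @ z))) =
         (\<Sum>u\<in>words (Suc j). word_coeff c r u * \<phi> (u @ z))"
proof -
  have "(\<Sum>w\<in>words j. X w * \<phi> ([i] @ w @ z)) =
      (\<Sum>w\<in>words j. word_coeff c (Suc r) w * \<phi> ([i] @ w @ z))"
    if "i < n" for i
    by (rule pairing_slice[OF assms(1,2) _ assms(3)]) (use that in \<open>simp_all add: words_def\<close>)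
  then show ?thesis
    by (simp add: sum_words_Suc sum_distrib_left ac_simps)
qed

lemma partial_product_low:
  "j \<le> m \<Longrightarrow> \<exists>X. partial_product c j = embed j X \<and> X \<in> symt j \<and>
     (\<forall>\<phi>\<in>symt j. pairing j X \<phi> = pairing j (word_coeff c (q - j)) \<phi>)"
proof (induction j)
  case 0
  show ?case
    using unit_tensor_symt
    by (intro exI[of _ unit_tensor])
        (simp add: partial_product_def alg_one_def pairing_eq_sum unit_tensor_def)
next
  case (Suc j)
  then obtain X where X: "partial_product c j = embed j X" "X \<in> symt j"
    "\<forall>\<psi>\<in>symt j. pairing j X \<psi> = pairing j (word_coeff c (q - j)) \<psi>"
    by auto
  define r where "r = q - Suc j"
  have r: "Suc r = q - j" "j < q" using Suc.prems q_eq by (auto simp: r_def)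
  have "1 + j \<le> m" "1 \<le> m" "1 + j \<le> q" using Suc.prems m_pos q_eq by simp_all
  then have "cmult 1 j (c r) X = sym_prod 1 j (c r) X" by (simp add: cmult_def)
  then have prod: "partial_product c (Suc j) = embed (Suc j) (sym_prod 1 j (c r) X)"
    using X(1) r(2) by (simp add: partial_product_Suc alg_mult_embed r_def)
  have "pairing (Suc j) (sym_prod 1 j (c r) X) \<phi> = pairing (Suc j) (word_coeff c (q - Suc j)) \<phi>"
    if phi: "\<phi> \<in> symt (Suc j)" for \<phi>
  proof -
    have "pairing (Suc j) (sym_prod 1 j (c r) X) \<phi> = tensor_pairing 1 j (c r) X \<phi>"
      using pairing_sym_prod[of \<phi> 1 j] phi by simp
    also have "\<dots> = (\<Sum>i<n. c r [i] * (\<Sum>w\<in>words j. X w * \<phi> ([i] @ w @ [])))"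
      unfolding tensor_pairing_def sum_words_1 by (simp add: sum_distrib_left ac_simps)
    also have "\<dots> = (\<Sum>u\<in>words (Suc j). word_coeff c r u * \<phi> (u @ []))"
      by (rule cons_factor_slice[where l = 0]) (use X(3) phi r in simp_all)
    finally show ?thesis by (simp add: pairing_eq_sum r_def)
  qed
  then show ?case using prod sym_prod_in_symt[of 1 j "c r" X] by auto
qed

lemma cmult_middle_coeff:
  assumes X: "\<forall>\<psi>\<in>symt m. pairing m X \<psi> = pairing m (word_coeff c (q - m)) \<psi>"
  shows "cmult 1 m (c (q - Suc m)) X = coeff_contract c (Suc m)"
proof
  fix xs
  have "\<not> q < 1 + m" "\<not> 1 + m \<le> m" using m_pos q_eq by auto
  then have M: "cmult 1 m (c (q - Suc m)) X = fcontract 1 m (c (q - Suc m)) X"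
    using m_pos by (simp add: cmult_def)
  show "cmult 1 m (c (q - Suc m)) X xs = coeff_contract c (Suc m) xs"
  proof (cases "xs \<in> words (q - Suc m)")
    case True
    have r: "Suc (q - Suc m) = q - m" using q_eq by simp
    have "Suc m \<le> q" using q_eq by simp
    then have fS: "f \<in> symt (Suc m + (q - Suc m))" using f_symt by simp
    have "fcontract 1 m (c (q - Suc m)) X xs =
        (\<Sum>i<n. c (q - Suc m) [i] * (\<Sum>w\<in>words m. X w * f ([i] @ w @ xs)))"
      unfolding fcontract_def sum_words_1 using True by (simp add: sum_distrib_left ac_simps)
    also have "\<dots> = (\<Sum>u\<in>words (Suc m). word_coeff c (q - Suc m) u * f (u @ xs))"
      by (rule cons_factor_slice[OF _ fS True]) (use X r in simp)
    finally show ?thesis using True M by (simp add: coeff_contract_def)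
  qed (simp only: M, simp add: fcontract_def coeff_contract_def)
qed

lemma cmult_high_coeff:
  assumes "m < j" "j < q"
  shows "cmult 1 j (c (q - Suc j)) (coeff_contract c j) = coeff_contract c (Suc j)"
proof
  fix xs
  define r where "r = q - Suc j"
  have r: "Suc r = q - j" using assms by (simp add: r_def)
  have M: "cmult 1 j (c r) (coeff_contract c j) =
      fscale (eps ^ j) (contract 1 (q - j) (c r) (coeff_contract c j))"
    using assms m_pos by (simp add: cmult_def)
  have "cmult 1 j (c r) (coeff_contract c j) xs = coeff_contract c (Suc j) xs"
  proof (cases "xs \<in> words (q - Suc j)")
    case True
    have ix: "i < n \<Longrightarrow> [i] @ xs \<in> words (q - j)" for i using True assms by (auto simp: words_def)
    have swap: "f (w @ [i] @ xs) = eps ^ j * f ([i] @ w @ xs)" if "i < n" "w \<in> words j" for i w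
    proof -
      have "[] @ w @ [i] @ xs \<in> words q" using that True assms by (auto simp: words_def)
      then show ?thesis using symt_swap_blocks[OF f_symt, of "[]" w "[i]" xs] that
        by (simp add: length_in_words)
    qed
    have "fscale (eps ^ j) (contract 1 (q - j) (c r) (coeff_contract c j)) xs =
        eps ^ j * (\<Sum>i<n. c r [i] * (\<Sum>w\<in>words j. word_coeff c (q - j) w * f (w @ [i] @ xs)))"
      unfolding contract_def fscale_def sum_words_1 coeff_contract_def using True ix
      by (simp add: Suc_diff_Suc r_def)
    also have "\<dots> = (eps ^ j * eps ^ j) *
        (\<Sum>i<n. c r [i] * (\<Sum>w\<in>words j. word_coeff c (q - j) w * f ([i] @ w @ xs)))"
      using swap by (simp add: sum_distrib_left ac_simps)
    also have "\<dots> = (\<Sum>u\<in>words (Suc j). word_coeff c r u * f (u @ xs))"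
      unfolding eps_power_square sum_words_Suc by (simp add: r sum_distrib_left ac_simps)
    finally show ?thesis using True M by (simp add: coeff_contract_def r_def)
  qed (simp only: M, simp add: contract_def fscale_def coeff_contract_def Suc_diff_Suc)
  then show "cmult 1 j (c (q - Suc j)) (coeff_contract c j) xs = coeff_contract c (Suc j) xs"
    by (simp add: r_def)
qed

lemma partial_product_high:
  assumes "m < j" "j \<le> q"
  shows "partial_product c j = embed j (coeff_contract c j)"
proof -
  have "Suc m \<le> j" using assms(1) by simp
  then show ?thesis using assms(2)
  proof (induction j rule: dec_induct)
    case base
    obtain X where X: "partial_product c m = embed m X"
      "\<forall>\<psi>\<in>symt m. pairing m X \<psi> = pairing m (word_coeff c (q - m)) \<psi>"
      using partial_product_low[of m c] by auto
    have "m < q" using q_eq by simp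
    then have "partial_product c (Suc m) = embed (Suc m) (cmult 1 m (c (q - Suc m)) X)"
      using X(1) by (simp add: partial_product_Suc alg_mult_embed)
    then show ?case using cmult_middle_coeff[OF X(2)] by simp
  next
    case (step j)
    then have j: "m < j" "j < q" by simp_all
    then have "partial_product c (Suc j) =
        embed (Suc j) (cmult 1 j (c (q - Suc j)) (coeff_contract c j))"
      using step.IH by (simp add: partial_product_Suc alg_mult_embed)
    then show ?case using cmult_high_coeff[OF j] by simp
  qed
qed

lemma full_product:
  "top_coeff (partial_product c q) = (\<Sum>u\<in>words q. word_coeff c 0 u * f u)"
proof -
  have "m < q" using q_eq by simp
  then show ?thesis
    using partial_product_high[of q c] by (simp add: top_coeff_embed coeff_contract_def)
qed

end

locale graded_truncated_algebra = truncated_algebra +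
  fixes p :: nat
  assumes p_pos: "0 < p" and eps_eq: "eps = (-1) ^ p"
begin

definition grade :: "nat \<Rightarrow> qvec set" where
  "grade i = (if p dvd i \<and> i div p \<le> q then embed (i div p) ` symt (rank (i div p)) else {0})"

definition alg_carrier :: "qvec set" where
  "alg_carrier = {(\<Sum>i\<in>I. x i) | I x. finite I \<and> (\<forall>i\<in>I. x i \<in> grade i)}"

lemma grade_mult: "d \<le> q \<Longrightarrow> grade (p * d) = embed d ` symt (rank d)"
  using p_pos by (simp add: grade_def)

lemma grade_eq_zero: assumes "\<And>d. d \<le> q \<Longrightarrow> i \<noteq> p * d" shows "grade i = {0}"
proof -
  have nd: "\<not> (p dvd i \<and> i div p \<le> q)"
  proof
    assume h: "p dvd i \<and> i div p \<le> q"
    then obtain k where k: "i = p * k" by (auto elim: dvdE)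
    then have "i div p = k" using p_pos by simp
    then show False using h k assms by auto
  qed
  show ?thesis unfolding grade_def by (rule if_not_P[OF nd])
qed

lemma zero_in_grade: "0 \<in> grade i"
  unfolding grade_def by (auto intro: image_eqI[where x=0])

lemma gradeE:
  assumes "x \<in> grade i"
  obtains "x = 0" | d t where "d \<le> q" "i = p * d" "t \<in> symt (rank d)" "x = embed d t"
  using assms p_pos unfolding grade_def by (auto split: if_splits elim!: dvdE)

lemma grade_well_graded: "x \<in> grade i \<Longrightarrow> x \<in> well_graded"
  by (erule gradeE) (auto simp: zero_well_graded embed_well_graded)

lemma carrier_well_graded: "x \<in> alg_carrier \<Longrightarrow> x \<in> well_graded"
  unfolding alg_carrier_def
proof (elim CollectE exE conjE)
  fix I y assume "x = sum y I" "finite I" "\<forall>i\<in>I. y i \<in> grade i"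
  then show "x \<in> well_graded" using grade_well_graded by (auto intro!: sum_well_graded)
qed

lemma subspace_grade: "module.subspace qscale (grade i)"
  unfolding qscale_eq_fscale grade_def
  using module_hom.subspace_image[OF module_hom_embed subspace_symt] by simp

lemma vector_space_qscale: "vector_space qscale"
  unfolding qscale_eq_fscale by (rule fvs.vector_space_axioms)

lemma grade_sum_eq_0:
  assumes "finite I" "\<forall>i\<in>I. x i \<in> grade i" "(\<Sum>i\<in>I. x i) = 0"
  shows "\<forall>i\<in>I. x i = 0"
proof
  fix i assume i: "i \<in> I"
  show "x i = 0"
  proof (rule gradeE[of "x i" i])
    show "x i \<in> grade i" using assms i by blast
  next
    fix d t assume d: "d \<le> q" "i = p * d" "t \<in> symt (rank d)" "x i = embed d t"
    have other: "component d (x j) = 0" if "j \<in> I" "j \<noteq> i" for j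
    proof (rule gradeE[of "x j" j])
      show "x j \<in> grade j" using assms that by blast
    next
      fix d' t' assume "d' \<le> q" "j = p * d'" "t' \<in> symt (rank d')" "x j = embed d' t'"
      then show ?thesis using that d by (auto simp: component_embed)
    qed simp
    have "0 = component d (\<Sum>j\<in>I. x j)" using assms(3) by simp
    also have "\<dots> = (\<Sum>j\<in>I. if j = i then t else 0)"
      unfolding component_sum using other d by (intro sum.cong refl) (auto simp: component_embed)
    also have "\<dots> = t" using i assms(1) by simp
    finally show ?thesis using d by simp
  qed
qed

lemma alg_one_neq_0: "alg_one \<noteq> 0"
proof
  assume "alg_one = 0"
  then have "component 0 alg_one [] = 0" by simp
  then show False by (simp add: alg_one_def component_embed unit_tensor_def)
qed

lemma grade_0: "grade 0 = {qscale k alg_one | k. True}"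
proof -
  have "grade 0 = embed 0 ` symt 0" using grade_mult[of 0] by (simp add: rank_0)
  also have "\<dots> = {qscale k alg_one | k. True}"
  proof
    show "embed 0 ` symt 0 \<subseteq> {qscale k alg_one |k. True}"
      using symt_0_eq by (auto simp: qscale_eq_fscale alg_one_def embed_fscale[symmetric]) (metis)
    show "{qscale k alg_one |k. True} \<subseteq> embed 0 ` symt 0"
      by (auto simp: qscale_eq_fscale alg_one_def embed_fscale[symmetric] intro!: imageI
          fscale_in_symt unit_tensor_symt)
  qed
  finally show ?thesis .
qed

lemma alg_mult_one_left:
  assumes x: "x \<in> well_graded"
  shows "alg_mult alg_one x = x"
proof -
  have "alg_mult alg_one x = (\<Sum>d\<le>q. embed d (component d x))"
    unfolding alg_one_def alg_mult_embed_left[OF x]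
    using x by (intro sum.cong refl) (simp add: cmult_unit_left well_graded_component)
  then show ?thesis using well_graded_eq_sum[OF x] by simp
qed

lemma alg_mult_one_right:
  assumes x: "x \<in> well_graded"
  shows "alg_mult x alg_one = x"
proof -
  have "alg_mult x alg_one = (\<Sum>d\<le>q. embed d (component d x))"
    unfolding alg_one_def alg_mult_embed_right[OF x]
    using x by (intro sum.cong refl) (simp add: cmult_unit_right well_graded_component)
  then show ?thesis using well_graded_eq_sum[OF x] by simp
qed

lemma grade_mult_closed: "a \<in> grade r \<Longrightarrow> b \<in> grade s \<Longrightarrow> alg_mult a b \<in> grade (r + s)"
proof (erule gradeE, simp add: zero_in_grade)
  fix d t assume d: "d \<le> q" "r = p * d" "t \<in> symt (rank d)" "a = embed d t" and b: "b \<in> grade s"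
  show "alg_mult a b \<in> grade (r + s)"
  proof (rule gradeE[OF b])
    assume "b = 0" then show ?thesis by (simp add: zero_in_grade)
  next
    fix d' t' assume d': "d' \<le> q" "s = p * d'" "t' \<in> symt (rank d')" "b = embed d' t'"
    show ?thesis
    proof (cases "d + d' \<le> q")
      case True
      then have "alg_mult a b \<in> embed (d + d') ` symt (rank (d + d'))"
        using d d' by (auto simp: alg_mult_embed intro!: imageI cmult_in_symt)
      then show ?thesis using grade_mult[OF True] d d' by (simp add: distrib_left)
    next
      case False
      then show ?thesis using d d' by (simp add: alg_mult_embed cmult_beyond_top zero_in_grade)
    qed
  qed
qed

lemma eps_power_p: "eps ^ (p * k) = eps ^ k"
proof -
  have "eps ^ p = eps" using eps_power[of p] by (cases "even p") (auto simp: eps_eq)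
  then show ?thesis by (simp add: power_mult)
qed

lemma neg_one_power_degrees: "(-1::rat) ^ (p * d1 * (p * d2)) = eps ^ (d1 * d2)"
proof -
  have e1: "p * d1 * (p * d2) = p * (p * (d1 * d2))" by (simp add: ac_simps)
  have "(-1::rat) ^ (p * d1 * (p * d2)) = ((-1) ^ p) ^ (p * (d1 * d2))"
    by (simp only: e1 power_mult)
  then have "(-1::rat) ^ (p * d1 * (p * d2)) = eps ^ (p * (d1 * d2))" by (simp add: eps_eq)
  then show ?thesis by (simp add: eps_power_p)
qed

lemma grade_commute: "a \<in> grade r \<Longrightarrow> b \<in> grade s \<Longrightarrow> alg_mult a b =
    qscale ((-1) ^ (r * s)) (alg_mult b a)"
proof (erule gradeE, simp add: qscale_eq_fscale)
  fix d t assume d: "d \<le> q" "r = p * d" "t \<in> symt (rank d)" "a = embed d t" and b: "b \<in> grade s"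
  show "alg_mult a b = qscale ((-1) ^ (r * s)) (alg_mult b a)"
  proof (rule gradeE[OF b])
    assume "b = 0" then show ?thesis by (simp add: qscale_eq_fscale)
  next
    fix d' t' assume d': "d' \<le> q" "s = p * d'" "t' \<in> symt (rank d')" "b = embed d' t'"
    show ?thesis using d d'
      by (simp add: alg_mult_embed qscale_eq_fscale neg_one_power_degrees cmult_commute[of d d' t
          t'] embed_fscale add.commute)
  qed
qed

lemma grade_top: "grade (p * q) = embed q ` symt 0" using grade_mult[of q] by (simp add: rank_q)

lemma linear_top_coeff: "linear_on qscale (*) (grade (p * q)) UNIV top_coeff"
  unfolding linear_on_def by (simp add: top_coeff_def qscale_def)

lemma bij_top_coeff: "bij_betw top_coeff (grade (p * q)) UNIV"
  unfolding bij_betw_def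
proof
  show "inj_on top_coeff (grade (p * q))"
    unfolding grade_top inj_on_def
  proof (clarify)
    fix s t assume st: "s \<in> symt 0" "t \<in> symt 0" "top_coeff (embed q s) = top_coeff (embed q t)"
    then have "s [] = t []" by (simp add: top_coeff_embed)
    then have "s = t" using symt_0_eq[OF st(1)] symt_0_eq[OF st(2)] by simp
    then show "embed q s = embed q t" by simp
  qed
  have "r \<in> top_coeff ` grade (p * q)" for r
    unfolding grade_top
  proof (rule image_eqI[of _ _ "embed q (fscale r unit_tensor)"])
    show "r = top_coeff (embed q (fscale r unit_tensor))"
      by (simp add: top_coeff_embed fscale_def unit_tensor_def)
    show "embed q (fscale r unit_tensor) \<in> embed q ` symt 0"
      by (intro imageI fscale_in_symt unit_tensor_symt)
  qed
  then show "top_coeff ` grade (p * q) = UNIV" by auto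
qed

lemma grade_above_top: assumes "p * q < i" shows "grade i = {0}"
proof (rule grade_eq_zero)
  fix d assume "d \<le> q"
  then have "p * d \<le> p * q" by simp
  then show "i \<noteq> p * d" using assms by linarith
qed

lemma grade_nonzero_dvd: "grade i \<noteq> {0} \<Longrightarrow> p dvd i"
  by (auto simp: grade_def split: if_splits)

lemma finite_dim_grade: "finite_dim_sub qscale (grade i)"
proof (cases "p dvd i \<and> i div p \<le> q")
  case False
  then have "grade i = {0}" unfolding grade_def by (rule if_not_P)
  then show ?thesis unfolding finite_dim_sub_def qscale_eq_fscale by (intro exI[of _ "{}"]) simp
next
  case True
  define d where "d = i div p"
  obtain B where B: "finite B" "B \<subseteq> symt (rank d)" "fvs.span B = symt (rank d)"
    using symt_finitely_spanned by blast
  have "grade i = embed d ` fvs.span B"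
    using True B(3) by (simp add: grade_def d_def)
  also have "\<dots> = fvs.span (embed d ` B)"
    by (rule module_hom.span_image[OF module_hom_embed, symmetric])
  finally have span: "grade i = fvs.span (embed d ` B)" .
  have "embed d ` B \<subseteq> grade i" using True B(2) by (auto simp: grade_def d_def)
  then show ?thesis unfolding finite_dim_sub_def qscale_eq_fscale
    using B(1) span by (intro exI[of _ "embed d ` B"]) simp
qed

definition pair_sign :: "nat \<Rightarrow> rat" where
  "pair_sign d = (if d \<le> m then eps ^ (d * (q - d)) else 1)"

lemma pair_sign_square: "pair_sign d * pair_sign d = 1"
  by (simp add: pair_sign_def eps_power_square)

lemma top_coeff_alg_mult_complement:
  "d \<le> q \<Longrightarrow> top_coeff (alg_mult (embed d a) (embed (q - d) b)) = pair_sign d * pairing (rank d) a b"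
  by (simp add: pair_sign_def alg_mult_embed cmult_complement top_coeff_embed)

lemma top_coeff_inject:
  "x \<in> grade (p * q) \<Longrightarrow> y \<in> grade (p * q) \<Longrightarrow> top_coeff x = top_coeff y \<Longrightarrow> x = y"
  using bij_top_coeff by (auto simp: bij_betw_def inj_on_def)

lemma grade_complement: "d \<le> q \<Longrightarrow> grade (p * q - p * d) = embed (q - d) ` symt (rank d)"
  using grade_mult[of "q - d"] rank_complement[of d] by (simp add: diff_mult_distrib2)

lemma pd_injective:
  assumes "u \<in> grade i" "\<forall>v\<in>grade (p * q - i). alg_mult u v = 0"
  shows "u = 0"
  using assms(1)
proof (rule gradeE)
  fix d t assume d: "d \<le> q" "i = p * d" "t \<in> symt (rank d)" "u = embed d t"
  have "embed (q - d) t \<in> grade (p * q - i)" using grade_complement[OF d(1)] d by auto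
  then have "top_coeff (alg_mult u (embed (q - d) t)) = 0" using assms(2)
    by (simp add: top_coeff_def)
  then have "pair_sign d * pairing (rank d) t t = 0" using d
    by (simp add: top_coeff_alg_mult_complement)
  then have "pairing (rank d) t t = 0" using pair_sign_square[of d] by auto
  then show "u = 0" using pairing_self_eq_0[OF d(3)] d by simp
qed

lemma linear_on_zero: "linear_on s1 s2 X Y h \<Longrightarrow> 0 \<in> X \<Longrightarrow> h 0 = 0"
  unfolding linear_on_def by (metis add.right_neutral add_left_cancel)

lemma pd_surjective_mult:
  assumes d: "d \<le> q" and h: "linear_on qscale qscale (grade (p * q - p * d)) (grade (p * q)) h"
  shows "\<exists>u\<in>grade (p * d). \<forall>v\<in>grade (p * q - p * d). h v = alg_mult u v"
proof -
  have GC: "grade (p * q - p * d) = embed (q - d) ` symt (rank d)" by (rule grade_complement[OF d])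
  define g where "g \<phi> = top_coeff (h (embed (q - d) \<phi>))" for \<phi>
  have "\<exists>c\<in>symt (rank d). \<forall>\<phi>\<in>symt (rank d). pairing (rank d) c \<phi> = g \<phi>"
  proof (rule riesz_symt)
    fix x y assume "x \<in> symt (rank d)" "y \<in> symt (rank d)"
    then show "g (x + y) = g x + g y"
      using h GC unfolding linear_on_def g_def embed_add by (auto simp: top_coeff_def)
  next
    fix c x assume "x \<in> symt (rank d)"
    then show "g (fscale c x) = c * g x"
      using h GC unfolding linear_on_def g_def embed_fscale qscale_eq_fscale
      by (auto simp: top_coeff_def fscale_def)
  qed
  then obtain c where c: "c \<in> symt (rank d)" "\<forall>\<phi>\<in>symt (rank d). pairing (rank d) c \<phi> = g \<phi>"
    by blast
  \<comment> \<open>multiplication into the top degree is the pairing up to the sign \<open>pair_sign d\<close>,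
    which squares to \<open>1\<close>\<close>
  define u where "u = embed d (fscale (pair_sign d) c)"
  have u: "u \<in> grade (p * d)" using d c(1) grade_mult[OF d]
    by (auto simp: u_def intro!: fscale_in_symt)
  have "h v = alg_mult u v" if v: "v \<in> grade (p * q - p * d)" for v
  proof (rule top_coeff_inject)
    show "h v \<in> grade (p * q)" using h v by (auto simp: linear_on_def)
    have "p * d + (p * q - p * d) = p * q" using d by simp
    then show "alg_mult u v \<in> grade (p * q)" using grade_mult_closed[OF u v] by simp
    obtain \<phi> where phi: "\<phi> \<in> symt (rank d)" "v = embed (q - d) \<phi>" using v GC by auto
    have "top_coeff (alg_mult u v) = pair_sign d * (pair_sign d * g \<phi>)"
      using d phi c by (simp add: u_def top_coeff_alg_mult_complement pairing_scale_left)
    also have "\<dots> = top_coeff (h v)"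
      using pair_sign_square[of d] by (simp add: g_def phi mult.assoc[symmetric])
    finally show "top_coeff (h v) = top_coeff (alg_mult u v)" ..
  qed
  then show ?thesis using u by blast
qed

lemma pd_surjective:
  assumes "i \<le> p * q" "linear_on qscale qscale (grade (p * q - i)) (grade (p * q)) h"
  shows "\<exists>u\<in>grade i. \<forall>v\<in>grade (p * q - i). h v = alg_mult u v"
proof (cases "\<exists>d\<le>q. i = p * d")
  case True
  then show ?thesis using pd_surjective_mult assms(2) by blast
next
  case False
  have "grade (p * q - i) = {0}"
  proof (rule grade_eq_zero)
    fix d assume "d \<le> q"
    show "p * q - i \<noteq> p * d"
    proof
      assume "p * q - i = p * d"
      then have "i = p * (q - d)" using assms(1) by (simp add: diff_mult_distrib2)
      moreover have "q - d \<le> q" by simp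
      ultimately show False using False by blast
    qed
  qed
  then show ?thesis using zero_in_grade linear_on_zero[OF assms(2)] by auto
qed

lemma is_graded_algebra: "graded_algebra qscale alg_carrier grade alg_mult alg_one"
  unfolding graded_algebra_def
proof (intro conjI allI ballI impI)
  show "vector_space qscale" by (rule vector_space_qscale)
  show "module.subspace qscale (grade i)" for i by (rule subspace_grade)
  show "alg_carrier = {\<Sum>i\<in>I. x i |I x. finite I \<and> (\<forall>i\<in>I. x i \<in> grade i)}" by (rule alg_carrier_def)
  show "x i = 0" if "finite I \<and> (\<forall>i\<in>I. x i \<in> grade i) \<and> sum x I = 0" "i \<in> I" for I x i
    using grade_sum_eq_0[of I x] that by blast
  show "alg_mult (a + b) c = alg_mult a c + alg_mult b c" for a b c by (rule alg_mult_add_left)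
  show "alg_mult a (b + c) = alg_mult a b + alg_mult a c" for a b c by (rule alg_mult_add_right)
  show "alg_mult (qscale k a) b = qscale k (alg_mult a b)" for k a b
    by (simp add: qscale_eq_fscale alg_mult_scale_left)
  show "alg_mult a (qscale k b) = qscale k (alg_mult a b)" for k a b
    by (simp add: qscale_eq_fscale alg_mult_scale_right)
  show "alg_mult (alg_mult a b) c =
      alg_mult a (alg_mult b c)" if "a \<in> alg_carrier" "b \<in> alg_carrier" "c \<in> alg_carrier" for a b c
    using that by (simp add: alg_mult_assoc carrier_well_graded)
  show "alg_mult a b \<in> grade (r + s')" if "a \<in> grade r" "b \<in> grade s'" for r s' a b using that
    by (rule grade_mult_closed)
  show "alg_one \<noteq> 0" by (rule alg_one_neq_0)
  show "grade 0 = {qscale k alg_one |k. True}" by (rule grade_0)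
  show "alg_mult alg_one a = a" if "a \<in> alg_carrier" for a
    using that by (simp add: alg_mult_one_left carrier_well_graded)
  show "alg_mult a alg_one = a" if "a \<in> alg_carrier" for a
    using that by (simp add: alg_mult_one_right carrier_well_graded)
qed

lemma is_graded_commutative: "graded_commutative qscale grade alg_mult"
  unfolding graded_commutative_def using grade_commute by blast

lemma is_poincare_duality: "poincare_duality qscale grade alg_mult (p * q)"
  unfolding poincare_duality_def
proof (intro conjI allI impI ballI)
  show "\<exists>f. linear_on qscale (*) (grade (p * q)) UNIV f \<and> bij_betw f (grade (p * q)) UNIV"
    using linear_top_coeff bij_top_coeff by blast
  show "grade i = {0}" if "p * q < i" for i using that by (rule grade_above_top)
  show "finite_dim_sub qscale (grade i)" for i by (rule finite_dim_grade)
  show "u = 0" if "i \<le> p * q" "u \<in> grade i" "\<forall>v\<in>grade (p * q - i). alg_mult u v = 0" for i u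
    using pd_injective that by blast
  show "\<exists>u\<in>grade i. \<forall>v\<in>grade (p * q - i). h v = alg_mult u v"
    if "i \<le> p * q" "linear_on qscale qscale (grade (p * q - i)) (grade (p * q)) h" for i h
    using pd_surjective that by blast
qed

end

locale realisation = graded_truncated_algebra n eps q m f p +
    fdv: finite_dimensional_vector_space sV Basis
  for n eps q m f p and sV :: "rat \<Rightarrow> 'v::ab_group_add \<Rightarrow> 'v" and Basis +
  fixes e :: "nat \<Rightarrow> 'v" and F :: "(nat \<Rightarrow> 'v) \<Rightarrow> rat"
  assumes e_bij: "bij_betw e {..<n} Basis"
    and Fml: "multilinear sV q F"
    and f_eq: "\<forall>xs\<in>words q. f xs = F (\<lambda>k. e (xs ! k))"
begin

definition coord :: "nat \<Rightarrow> 'v \<Rightarrow> rat" where "coord i v = fdv.representation Basis v (e i)"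

definition coord_tensor :: "'v \<Rightarrow> nat list \<Rightarrow> rat" where
  "coord_tensor v = (\<lambda>xs. case xs of [i] \<Rightarrow> if i < n then coord i v else 0 | _ \<Rightarrow> 0)"

definition embed_V :: "'v \<Rightarrow> qvec" where "embed_V v = embed 1 (coord_tensor v)"

lemma basis_decomposition: "v = (\<Sum>i<n. sV (coord i v) (e i))"
proof -
  have "(\<Sum>b\<in>Basis. sV (fdv.representation Basis v b) b) = v"
    by (rule fdv.sum_representation_eq)
        (auto simp: fdv.independent_Basis fdv.span_Basis fdv.finite_Basis)
  moreover have "(\<Sum>i<n. sV (coord i v) (e i)) = (\<Sum>b\<in>Basis. sV (fdv.representation Basis v b) b)"
    unfolding coord_def by (rule sum.reindex_bij_betw[OF e_bij])
  ultimately show ?thesis by simp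
qed

lemma coord_add: "coord i (v + w) = coord i v + coord i w"
  unfolding coord_def
  by (subst fdv.representation_add) (auto simp: fdv.independent_Basis fdv.span_Basis)

lemma coord_scale: "coord i (sV c v) = c * coord i v"
  unfolding coord_def
  by (subst fdv.representation_scale) (auto simp: fdv.independent_Basis fdv.span_Basis)

lemma coord_lincomb: assumes "j < n" shows "coord j (\<Sum>i<n. sV (t i) (e i)) = t j"
proof -
  have eB: "e i \<in> Basis" if "i < n" for i using e_bij that by (auto simp: bij_betw_def)
  have einj: "i < n \<Longrightarrow> e j = e i \<longleftrightarrow> j = i" for i using e_bij assms
    by (auto simp: bij_betw_def inj_on_def)
  have "coord j (\<Sum>i<n. sV (t i) (e i)) = (\<Sum>i<n. fdv.representation Basis (sV (t i) (e i)) (e j))"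
    unfolding coord_def
    by (subst fdv.representation_sum) (auto simp: fdv.independent_Basis fdv.span_Basis)
  also have "\<dots> = (\<Sum>i<n. t i * (if e j = e i then 1 else 0))"
    by (intro sum.cong refl)
       (simp add: fdv.representation_scale fdv.representation_basis fdv.independent_Basis
           fdv.span_Basis eB)
  also have "\<dots> = (\<Sum>i<n. if i = j then t j else 0)"
    by (intro sum.cong refl) (auto simp: einj)
  also have "\<dots> = t j" using assms by simp
  finally show ?thesis .
qed

lemma coord_tensor_symt: "coord_tensor v \<in> symt 1"
  unfolding symt_def
proof (intro CollectI conjI allI impI ballI)
  fix xs assume "xs \<notin> words 1"
  then show "coord_tensor v xs = 0" by (auto simp: coord_tensor_def words_def split: list.split)
qed auto

lemma grade_p: "grade p = embed 1 ` symt 1"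
proof -
  have "1 \<le> q" using q_eq by simp
  then show ?thesis using grade_mult[of 1] rank_1 by simp
qed

lemma linear_embed_V: "linear_on sV qscale UNIV (grade p) embed_V"
  unfolding linear_on_def
proof (intro conjI ballI allI)
  show "embed_V x \<in> grade p" for x unfolding grade_p embed_V_def by (intro imageI coord_tensor_symt)
  show "embed_V (x + y) = embed_V x + embed_V y" for x y
    unfolding embed_V_def embed_add[symmetric]
      by (rule arg_cong[where f="embed 1"])
          (auto simp: coord_tensor_def coord_add fun_eq_iff split: list.split)
  show "embed_V (sV c x) = qscale c (embed_V x)" for c x
    unfolding embed_V_def qscale_eq_fscale embed_fscale[symmetric]
      by (rule arg_cong[where f="embed 1"])
          (auto simp: coord_tensor_def coord_scale fscale_def fun_eq_iff split: list.split)
qed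

lemma coord_tensor_lincomb:
  assumes "t \<in> symt 1"
  shows "coord_tensor (\<Sum>i<n. sV (t [i]) (e i)) = t"
proof
  fix xs show "coord_tensor (\<Sum>i<n. sV (t [i]) (e i)) xs = t xs"
  proof (cases "xs \<in> words 1")
    case True
    then obtain i where "xs = [i]" "i < n" by (auto simp: words_def length_Suc_conv)
    then show ?thesis by (simp add: coord_tensor_def coord_lincomb)
  next
    case False
    then show ?thesis using assms
      by (auto simp: coord_tensor_def symt_def words_def split: list.split)
  qed
qed

lemma inj_embed_V: "inj embed_V"
proof (rule injI)
  fix v w assume "embed_V v = embed_V w"
  moreover have "1 \<le> q" using q_eq by simp
  ultimately have eq: "coord_tensor v = coord_tensor w"
    unfolding embed_V_def using embed_inject[of 1] by blast
  have "coord i v = coord i w" if "i < n" for i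
    using fun_cong[OF eq, of "[i]"] that by (simp add: coord_tensor_def)
  then show "v = w" using basis_decomposition[of v] basis_decomposition[of w] by simp
qed

lemma bij_embed_V: "bij_betw embed_V UNIV (grade p)"
  unfolding bij_betw_def
proof
  show "inj_on embed_V UNIV" by (rule inj_embed_V)
  show "range embed_V = grade p"
  proof
    show "range embed_V \<subseteq> grade p" using linear_embed_V by (auto simp: linear_on_def)
    show "grade p \<subseteq> range embed_V"
    proof
      fix x assume "x \<in> grade p"
      then obtain t where t: "t \<in> symt 1" "x = embed 1 t" unfolding grade_p by auto
      then have "x = embed_V (\<Sum>i<n. sV (t [i]) (e i))"
        by (simp add: embed_V_def coord_tensor_lincomb)
      then show "x \<in> range embed_V" by blast
    qed
  qed
qed

lemma F_cong: "(\<And>i. i < q \<Longrightarrow> v i = w i) \<Longrightarrow> F v = F w"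
  using Fml unfolding multilinear_def by blast
lemma F_add: "k < q \<Longrightarrow> F (v(k := x + y)) = F (v(k := x)) + F (v(k := y))"
  using Fml unfolding multilinear_def by blast
lemma F_scale: "k < q \<Longrightarrow> F (v(k := sV c x)) = c * F (v(k := x))"
  using Fml unfolding multilinear_def by blast

lemma F_lincomb_slot:
  assumes "k < q"
  shows "F (w(k := \<Sum>i<N. sV (a i) (e i))) = (\<Sum>i<N. a i * F (w(k := e i)))"
proof (induction N)
  case 0
  have "F (w(k := sV 0 0)) = 0 * F (w(k := 0))" by (rule F_scale[OF assms])
  moreover have "sV 0 0 = 0" by (rule fdv.scale_zero_left)
  ultimately have "F (w(k := 0)) = 0" by simp
  then show ?case by (simp only: lessThan_0 sum.empty)
next
  case (Suc N)
  show ?case unfolding sum.lessThan_Suc F_add[OF assms] F_scale[OF assms] Suc.IH ..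
qed

lemma F_expand_slot:
  assumes "r < q" "u \<in> words r"
  shows "F (\<lambda>k. if k < r then e (u ! k) else v k) =
    (\<Sum>i<n. coord i (v r) * F (\<lambda>k. if k < Suc r then e ((u @ [i]) ! k) else v k))"
proof -
  define g where "g = (\<lambda>k. if k < r then e (u ! k) else v k)"
  have lu: "length u = r" using assms(2) by (simp add: words_def)
  have "g = g(r := \<Sum>i<n. sV (coord i (v r)) (e i))"
    using basis_decomposition[of "v r"] by (auto simp: g_def fun_eq_iff)
  then have "F g = (\<Sum>i<n. coord i (v r) * F (g(r := e i)))"
    using F_lincomb_slot[OF assms(1), where w=g and N=n and a="\<lambda>i. coord i (v r)"] by simp
  also have "\<dots> = (\<Sum>i<n. coord i (v r) * F (\<lambda>k. if k < Suc r then e ((u @ [i]) ! k) else v k))"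
    by (intro sum.cong refl arg_cong2[where f="(*)"] arg_cong[where f=F])
       (auto simp: g_def fun_eq_iff nth_append lu)
  finally show ?thesis by (simp add: g_def)
qed

lemma F_expand:
  assumes "r \<le> q"
  shows "F v = (\<Sum>u\<in>words r. word_coeff (\<lambda>k. coord_tensor (v k)) 0 u *
                  F (\<lambda>k. if k < r then e (u ! k) else v k))"
  using assms
proof (induction r)
  case 0
  then show ?case by simp
next
  case (Suc r)
  define C where "C = (\<lambda>k. coord_tensor (v k))"
  have "F v = (\<Sum>u\<in>words r. word_coeff C 0 u * F (\<lambda>k. if k < r then e (u ! k) else v k))"
    using Suc.IH Suc.prems by (simp add: C_def)
  also have "\<dots> = (\<Sum>u\<in>words r. \<Sum>i<n. word_coeff C 0 (u @ [i]) *
      F (\<lambda>k. if k < Suc r then e ((u @ [i]) ! k) else v k))"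
  proof (intro sum.cong refl)
    fix u assume u: "u \<in> words r"
    have "C r [i] = coord i (v r)" if "i < n" for i using that by (simp add: C_def coord_tensor_def)
    then show "word_coeff C 0 u * F (\<lambda>k. if k < r then e (u ! k) else v k) =
      (\<Sum>i<n. word_coeff C 0 (u @ [i]) * F (\<lambda>k. if k < Suc r then e ((u @ [i]) ! k) else v k))"
      using Suc.prems u
      by (simp add: F_expand_slot sum_distrib_left word_coeff_snoc length_in_words ac_simps)
  qed
  also have "\<dots> = (\<Sum>u\<in>words (Suc r). word_coeff C 0 u *
      F (\<lambda>k. if k < Suc r then e (u ! k) else v k))"
  proof -
    have "(\<Sum>u\<in>words (r + 1). word_coeff C 0 u * F (\<lambda>k. if k < Suc r then e (u ! k) else v k)) =
      (\<Sum>u\<in>words r. \<Sum>w\<in>words 1. word_coeff C 0 (u @ w) *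
          F (\<lambda>k. if k < Suc r then e ((u @ w) ! k) else v k))"
      by (rule sum_words_append)
    then show ?thesis by (simp add: sum_words_1[simplified])
  qed
  finally show ?case by (simp add: C_def)
qed

lemma F_eq_cup_prod: "F v = top_coeff (cup_prod alg_mult alg_one (map (\<lambda>i. embed_V (v i)) [0..<q]))"
proof -
  have "F v = (\<Sum>u\<in>words q. word_coeff (\<lambda>k. coord_tensor (v k)) 0 u *
                 F (\<lambda>k. if k < q then e (u ! k) else v k))"
    by (rule F_expand) simp
  also have "\<dots> = (\<Sum>u\<in>words q. word_coeff (\<lambda>k. coord_tensor (v k)) 0 u * f u)"
  proof (intro sum.cong refl arg_cong2[where f="(*)"])
    fix u assume "u \<in> words q"
    moreover have "F (\<lambda>k. if k < q then e (u ! k) else v k) = F (\<lambda>k. e (u ! k))"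
      by (rule F_cong) simp
    ultimately show "F (\<lambda>k. if k < q then e (u ! k) else v k) = f u"
      using f_eq by simp
  qed
  also have "\<dots> = top_coeff (partial_product (\<lambda>k. coord_tensor (v k)) q)"
    by (rule full_product[symmetric])
  finally show ?thesis by (simp add: partial_product_def cup_prod_def embed_V_def comp_def)
qed

end

theorem proposition4p2:
  fixes p q :: nat
    and sV :: "rat \<Rightarrow> 'v::ab_group_add \<Rightarrow> 'v"
    and Basis :: "'v set"
    and F :: "(nat \<Rightarrow> 'v) \<Rightarrow> rat"
  assumes "p > 0" and "q \<ge> 3" and "odd q"
    and "finite_dimensional_vector_space sV Basis"
    and "multilinear sV q F"
    and "odd p \<Longrightarrow> skew_symmetric_ml q F"
    and "even p \<Longrightarrow> symmetric_ml q F"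
  shows "\<exists>(A :: qvec set) (G :: nat \<Rightarrow> qvec set) mult one
            (\<iota> :: 'v \<Rightarrow> qvec) (\<epsilon> :: qvec \<Rightarrow> rat).
      graded_algebra qscale A G mult one \<and>
      graded_commutative qscale G mult \<and>
      poincare_duality qscale G mult (p * q) \<and>
      linear_on sV qscale UNIV (G p) \<iota> \<and> bij_betw \<iota> UNIV (G p) \<and>
      linear_on qscale (*) (G (p * q)) UNIV \<epsilon> \<and> bij_betw \<epsilon> (G (p * q)) UNIV \<and>
      (\<forall>i>p * q. G i = {0}) \<and>
      (\<forall>i. G i \<noteq> {0} \<longrightarrow> p dvd i) \<and>
      (\<forall>v. F v = \<epsilon> (cup_prod mult one (map (\<lambda>i. \<iota> (v i)) [0..<q])))"
proof -
  define n where "n = card Basis"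
  obtain e where e: "bij_betw e {..<n} Basis"
    using ex_bij_betw_nat_finite[OF finite_dimensional_vector_space.finite_Basis[OF assms(4)]]
    by (auto simp: n_def atLeast0LessThan)
  define eps :: rat where "eps = (-1) ^ p"
  interpret sym_tensors n eps
    by unfold_locales (simp add: eps_def flip: power_mult_distrib)
  define f where "f = (\<lambda>xs. if xs \<in> words q then F (\<lambda>k. e (xs ! k)) else 0)"
  have F_swap: "F (v(i := v j, j := v i)) = eps * F v" if "i < q" "j < q" "i \<noteq> j" for i j v
    using assms(6,7) that by (cases "even p")
        (auto simp: eps_def skew_symmetric_ml_def symmetric_ml_def)
  have "f \<in> symt q"
    unfolding f_def
    by (rule coefficient_tensor_symt[OF _ F_swap]) (use assms(5) in \<open>simp_all add: multilinear_def\<close>)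
  then interpret graded_truncated_algebra n eps q "q div 2" f p
    by unfold_locales (use assms(1-3) eps_def in auto)
  interpret realisation n eps q "q div 2" f p sV Basis e F
    unfolding realisation_def realisation_axioms_def
    using graded_truncated_algebra_axioms assms(4,5) e by (auto simp: f_def)
  show ?thesis
    using is_graded_algebra is_graded_commutative is_poincare_duality linear_embed_V bij_embed_V
      linear_top_coeff bij_top_coeff grade_above_top grade_nonzero_dvd F_eq_cup_prod by blast
qed

end
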